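(* Let $Z=\{Z_t:t\ge0\}$ be a continuous fractional Brownian motion with Hurst parameter $H\in(0,1)$. For $\alpha>0$ let $Y^{(\alpha)}_t:=\int_0^t\mathrm{e}^{-\alpha s}\,dZ_{a(s,\alpha)}$ with $a(s,\alpha):=H\mathrm{e}^{\alpha s/H}/\alpha$ (pathwise Riemann–Stieltjes integral). For $\gamma>0$ let $$U^{(D,\gamma)}_t:=\mathrm{e}^{-\gamma t}\int_{-\infty}^t \mathrm{e}^{(\gamma-1)s}\,dZ_{a(s,1)},\quad t\in\mathbf{R},$$ where the integral over $(-\infty,t]$ is the almost sure limit as $T\to-\infty$ of the Riemann–Stieltjes integrals over $[T,t]$. Then the sample paths of $Y^{(\alpha)}$ and of $U^{(D,\gamma)}$ are locally Hölder continuous of every order $\beta<H$.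
   Context: A fractional Brownian motion with Hurst parameter $H\in(0,1)$ is a centered Gaussian process on $[0,\infty)$ with covariance $\frac12(t^{2H}+s^{2H}-|t-s|^{2H})$; a continuous version is taken. The process $U^{(D,\gamma)}$ is the stationary solution of the Langevin equation $dU_t=-\gamma U_t\,dt+dY^{(1)}_t$. *)

theory Defs
  imports "HOL-Probability.Probability"
begin

definition centered_gaussian_process ::
  "'a measure \<Rightarrow> real set \<Rightarrow> (real \<Rightarrow> real \<Rightarrow> real) \<Rightarrow> (real \<Rightarrow> 'a \<Rightarrow> real) \<Rightarrow> bool" where
  "centered_gaussian_process M T K X \<longleftrightarrow>
     prob_space M \<and>
     (\<forall>t\<in>T. X t \<in> borel_measurable M) \<and>
     (\<forall>(n::nat) (ts::nat \<Rightarrow> real) (c::nat \<Rightarrow> real). (\<forall>i<n. ts i \<in> T) \<longrightarrow>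
        (let v = (\<Sum>i<n. \<Sum>j<n. c i * c j * K (ts i) (ts j)) in
          (if v > 0
           then distributed M lborel (\<lambda>\<omega>. \<Sum>i<n. c i * X (ts i) \<omega>) (normal_density 0 (sqrt v))
           else (AE \<omega> in M. (\<Sum>i<n. c i * X (ts i) \<omega>) = 0))))"

definition fbm_cov :: "real \<Rightarrow> real \<Rightarrow> real \<Rightarrow> real" where
  "fbm_cov H t s = (t powr (2*H) + s powr (2*H) - \<bar>t - s\<bar> powr (2*H)) / 2"

definition continuous_fbm :: "'a measure \<Rightarrow> real \<Rightarrow> (real \<Rightarrow> 'a \<Rightarrow> real) \<Rightarrow> bool" where
  "continuous_fbm M H Z \<longleftrightarrow>
     centered_gaussian_process M {0..} (fbm_cov H) Z \<and>
     (\<forall>\<omega>\<in>space M. continuous_on {0..} (\<lambda>t. Z t \<omega>))"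

definition has_RS_integral ::
  "(real \<Rightarrow> real) \<Rightarrow> (real \<Rightarrow> real) \<Rightarrow> real \<Rightarrow> real \<Rightarrow> real \<Rightarrow> bool" where
  "has_RS_integral f g a b I \<longleftrightarrow>
     (\<forall>e>0. \<exists>d>0. \<forall>(n::nat) (x::nat \<Rightarrow> real) (\<xi>::nat \<Rightarrow> real).
        (x 0 = a \<and> x n = b \<and>
         (\<forall>i<n. x i < x (Suc i) \<and> x (Suc i) - x i < d \<and> x i \<le> \<xi> i \<and> \<xi> i \<le> x (Suc i)))
        \<longrightarrow> \<bar>(\<Sum>i<n. f (\<xi> i) * (g (x (Suc i)) - g (x i))) - I\<bar> < e)"

definition RS_integral :: "(real \<Rightarrow> real) \<Rightarrow> (real \<Rightarrow> real) \<Rightarrow> real \<Rightarrow> real \<Rightarrow> real" where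
  "RS_integral f g a b = (THE I. has_RS_integral f g a b I)"

definition time_change :: "real \<Rightarrow> real \<Rightarrow> real \<Rightarrow> real" where
  "time_change H s \<alpha> = H * exp (\<alpha> * s / H) / \<alpha>"

definition Y_proc :: "real \<Rightarrow> (real \<Rightarrow> 'a \<Rightarrow> real) \<Rightarrow> real \<Rightarrow> real \<Rightarrow> 'a \<Rightarrow> real" where
  "Y_proc H Z \<alpha> t \<omega> =
     RS_integral (\<lambda>s. exp (- \<alpha> * s)) (\<lambda>s. Z (time_change H s \<alpha>) \<omega>) 0 t"

definition U_partial :: "real \<Rightarrow> (real \<Rightarrow> 'a \<Rightarrow> real) \<Rightarrow> real \<Rightarrow> real \<Rightarrow> real \<Rightarrow> 'a \<Rightarrow> real" where
  "U_partial H Z \<gamma> T t \<omega> =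
     RS_integral (\<lambda>s. exp ((\<gamma> - 1) * s)) (\<lambda>s. Z (time_change H s 1) \<omega>) T t"

definition U_proc :: "real \<Rightarrow> (real \<Rightarrow> 'a \<Rightarrow> real) \<Rightarrow> real \<Rightarrow> real \<Rightarrow> 'a \<Rightarrow> real" where
  "U_proc H Z \<gamma> t \<omega> =
     exp (- \<gamma> * t) * Lim at_bot (\<lambda>T. U_partial H Z \<gamma> T t \<omega>)"

definition locally_holder_on :: "real set \<Rightarrow> real \<Rightarrow> (real \<Rightarrow> real) \<Rightarrow> bool" where
  "locally_holder_on S \<beta> f \<longleftrightarrow>
     (\<forall>a b. \<exists>C. \<forall>s\<in>S \<inter> {a..b}. \<forall>t\<in>S \<inter> {a..b}. \<bar>f s - f t\<bar> \<le> C * \<bar>s - t\<bar> powr \<beta>)"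

end

theory Submission
  imports Defs
begin

text \<open>Fractional Brownian motion paths are almost surely Hoelder continuous of every order
  below H: the 2p-th Gaussian moments of the dyadic increments are summable against the
  number of dyadic intervals, so by Borel--Cantelli almost every path has small dyadic
  increments from some level on, and chaining along dyadic approximations turns this into a
  Hoelder bound. Both processes integrate a smooth exponential against the fBm path composed
  with a smooth time change; integration by parts writes such a Riemann--Stieltjes integral
  as boundary terms minus a Riemann integral, which inherits the Hoelder regularity of the
  path. For U, the Hoelder bound at 0 together with Z 0 = 0 makes the integrand decay
  exponentially at minus infinity, which yields the limit T \<rightarrow> -\<infinity>.\<close>

section \<open>Hoelder continuity on sets of reals\<close>

definition holder_on :: "real set \<Rightarrow> real \<Rightarrow> (real \<Rightarrow> real) \<Rightarrow> bool" where
  "holder_on S \<beta> f \<longleftrightarrow> (\<exists>C\<ge>0. \<forall>s\<in>S. \<forall>t\<in>S. \<bar>f s - f t\<bar> \<le> C * \<bar>s - t\<bar> powr \<beta>)"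

lemma holder_onI:
  "0 \<le> C \<Longrightarrow> (\<And>s t. s \<in> S \<Longrightarrow> t \<in> S \<Longrightarrow> \<bar>f s - f t\<bar> \<le> C * \<bar>s - t\<bar> powr \<beta>) \<Longrightarrow> holder_on S \<beta> f"
  unfolding holder_on_def by blast

lemma holder_on_subset: "holder_on S \<beta> f \<Longrightarrow> T \<subseteq> S \<Longrightarrow> holder_on T \<beta> f"
  unfolding holder_on_def by blast

lemma holder_on_eq: "holder_on S \<beta> f \<Longrightarrow> (\<And>t. t \<in> S \<Longrightarrow> f t = g t) \<Longrightarrow> holder_on S \<beta> g"
  unfolding holder_on_def by simp

lemma holder_on_const: "holder_on S \<beta> (\<lambda>_. k)"
  by (rule holder_onI[of 0]) auto

lemma holder_on_add:
  assumes "holder_on S \<beta> f" "holder_on S \<beta> g"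
  shows "holder_on S \<beta> (\<lambda>t. f t + g t)"
proof -
  obtain C1 where C1: "0 \<le> C1" "\<And>s t. s \<in> S \<Longrightarrow> t \<in> S \<Longrightarrow> \<bar>f s - f t\<bar> \<le> C1 * \<bar>s - t\<bar> powr \<beta>"
    using assms(1) unfolding holder_on_def by blast
  obtain C2 where C2: "0 \<le> C2" "\<And>s t. s \<in> S \<Longrightarrow> t \<in> S \<Longrightarrow> \<bar>g s - g t\<bar> \<le> C2 * \<bar>s - t\<bar> powr \<beta>"
    using assms(2) unfolding holder_on_def by blast
  show ?thesis
  proof (rule holder_onI[of "C1 + C2"])
    fix s t assume st: "s \<in> S" "t \<in> S"
    have "\<bar>f s + g s - (f t + g t)\<bar> \<le> \<bar>f s - f t\<bar> + \<bar>g s - g t\<bar>" by simp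
    also have "\<dots> \<le> (C1 + C2) * \<bar>s - t\<bar> powr \<beta>"
      using C1(2)[OF st] C2(2)[OF st] by (simp add: distrib_right)
    finally show "\<bar>f s + g s - (f t + g t)\<bar> \<le> (C1 + C2) * \<bar>s - t\<bar> powr \<beta>" .
  qed (use C1 C2 in simp)
qed

lemma holder_on_uminus: "holder_on S \<beta> f \<Longrightarrow> holder_on S \<beta> (\<lambda>t. - f t)"
  unfolding holder_on_def by (simp add: abs_minus_commute)

lemma holder_on_diff:
  "holder_on S \<beta> f \<Longrightarrow> holder_on S \<beta> g \<Longrightarrow> holder_on S \<beta> (\<lambda>t. f t - g t)"
  using holder_on_add[of S \<beta> f "\<lambda>t. - g t"] holder_on_uminus[of S \<beta> g] by simp

lemma holder_on_imp_continuous_on: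
  assumes "holder_on S \<beta> f" "0 < \<beta>"
  shows "continuous_on S f"
proof -
  obtain C where C: "0 \<le> C" "\<And>s t. s \<in> S \<Longrightarrow> t \<in> S \<Longrightarrow> \<bar>f s - f t\<bar> \<le> C * \<bar>s - t\<bar> powr \<beta>"
    using assms(1) unfolding holder_on_def by blast
  show ?thesis
    unfolding continuous_on_iff
  proof (intro ballI allI impI)
    fix t e :: real assume t: "t \<in> S" and e: "0 < e"
    define d where "d = (e / (C + 1)) powr (1 / \<beta>)"
    have d: "0 < d" using e C(1) by (simp add: d_def)
    have "d powr \<beta> = e / (C + 1)"
      using e C(1) assms(2) by (simp add: d_def powr_powr)
    show "\<exists>d>0. \<forall>s\<in>S. dist s t < d \<longrightarrow> dist (f s) (f t) < e"
    proof (intro exI[of _ d] conjI ballI impI d)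
      fix s assume s: "s \<in> S" and "dist s t < d"
      then have "\<bar>s - t\<bar> powr \<beta> < e / (C + 1)"
        using \<open>d powr \<beta> = e / (C + 1)\<close> assms(2) by (metis abs_ge_zero dist_real_def powr_less_mono2)
      then have "C * \<bar>s - t\<bar> powr \<beta> \<le> C * (e / (C + 1))"
        using C(1) by (intro mult_left_mono) auto
      also have "\<dots> < e" using e C(1) by (simp add: field_simps)
      finally show "dist (f s) (f t) < e"
        using C(2)[OF s t] by (simp add: dist_real_def)
    qed
  qed
qed

lemma holder_on_Icc_bounded:
  assumes "holder_on {A..B} \<beta> f" "0 \<le> \<beta>"
  shows "\<exists>M\<ge>0. \<forall>t\<in>{A..B}. \<bar>f t\<bar> \<le> M"
proof (cases "A \<le> B")
  case True
  obtain C where C: "0 \<le> C" "\<And>s t. s \<in> {A..B} \<Longrightarrow> t \<in> {A..B} \<Longrightarrow> \<bar>f s - f t\<bar> \<le> C * \<bar>s - t\<bar> powr \<beta>"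
    using assms(1) unfolding holder_on_def by blast
  show ?thesis
  proof (intro exI[of _ "\<bar>f A\<bar> + C * (B - A) powr \<beta>"] conjI ballI)
    fix t assume t: "t \<in> {A..B}"
    have "\<bar>f t - f A\<bar> \<le> C * \<bar>t - A\<bar> powr \<beta>" using C(2)[of t A] t True by simp
    also have "\<dots> \<le> C * (B - A) powr \<beta>"
      using t assms(2) C(1) by (intro mult_left_mono powr_mono2) auto
    finally show "\<bar>f t\<bar> \<le> \<bar>f A\<bar> + C * (B - A) powr \<beta>" by linarith
  qed (use C(1) in simp)
qed auto

lemma holder_on_mult:
  assumes f: "holder_on {A..B} \<beta> f" and g: "holder_on {A..B} \<beta> g" and "0 \<le> \<beta>"
  shows "holder_on {A..B} \<beta> (\<lambda>t. f t * g t)"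
proof -
  obtain C1 where C1: "0 \<le> C1" "\<And>s t. s \<in> {A..B} \<Longrightarrow> t \<in> {A..B} \<Longrightarrow> \<bar>f s - f t\<bar> \<le> C1 * \<bar>s - t\<bar> powr \<beta>"
    using f unfolding holder_on_def by blast
  obtain C2 where C2: "0 \<le> C2" "\<And>s t. s \<in> {A..B} \<Longrightarrow> t \<in> {A..B} \<Longrightarrow> \<bar>g s - g t\<bar> \<le> C2 * \<bar>s - t\<bar> powr \<beta>"
    using g unfolding holder_on_def by blast
  obtain M1 where M1: "0 \<le> M1" "\<And>t. t \<in> {A..B} \<Longrightarrow> \<bar>f t\<bar> \<le> M1"
    using holder_on_Icc_bounded[OF f \<open>0 \<le> \<beta>\<close>] by blast
  obtain M2 where M2: "0 \<le> M2" "\<And>t. t \<in> {A..B} \<Longrightarrow> \<bar>g t\<bar> \<le> M2"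
    using holder_on_Icc_bounded[OF g \<open>0 \<le> \<beta>\<close>] by blast
  show ?thesis
  proof (rule holder_onI[of "M1 * C2 + M2 * C1"])
    fix s t assume st: "s \<in> {A..B}" "t \<in> {A..B}"
    have "\<bar>f s * g s - f t * g t\<bar> = \<bar>f s * (g s - g t) + g t * (f s - f t)\<bar>"
      by (simp add: algebra_simps)
    also have "\<dots> \<le> \<bar>f s\<bar> * \<bar>g s - g t\<bar> + \<bar>g t\<bar> * \<bar>f s - f t\<bar>"
      by (simp add: abs_mult[symmetric] abs_triangle_ineq)
    also have "\<dots> \<le> M1 * (C2 * \<bar>s - t\<bar> powr \<beta>) + M2 * (C1 * \<bar>s - t\<bar> powr \<beta>)"
      by (intro add_mono mult_mono M1 M2 C1 C2 st) (use M1 M2 in auto)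
    finally show "\<bar>f s * g s - f t * g t\<bar> \<le> (M1 * C2 + M2 * C1) * \<bar>s - t\<bar> powr \<beta>"
      by (simp add: algebra_simps)
  qed (use M1 M2 C1 C2 in simp)
qed

lemma holder_on_Icc_mono_exponent:
  assumes f: "holder_on {A..B} \<beta> f" and "0 \<le> \<beta>'" "\<beta>' \<le> \<beta>"
  shows "holder_on {A..B} \<beta>' f"
proof -
  obtain C where C: "0 \<le> C" "\<And>s t. s \<in> {A..B} \<Longrightarrow> t \<in> {A..B} \<Longrightarrow> \<bar>f s - f t\<bar> \<le> C * \<bar>s - t\<bar> powr \<beta>"
    using f unfolding holder_on_def by blast
  show ?thesis
  proof (rule holder_onI[of "C * \<bar>B - A\<bar> powr (\<beta> - \<beta>')"])
    fix s t assume st: "s \<in> {A..B}" "t \<in> {A..B}"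
    have "\<bar>s - t\<bar> powr \<beta> = \<bar>s - t\<bar> powr (\<beta> - \<beta>') * \<bar>s - t\<bar> powr \<beta>'"
      by (cases "s = t") (simp_all add: powr_add[symmetric])
    also have "\<dots> \<le> \<bar>B - A\<bar> powr (\<beta> - \<beta>') * \<bar>s - t\<bar> powr \<beta>'"
      using st assms by (intro mult_right_mono powr_mono2) auto
    finally show "\<bar>f s - f t\<bar> \<le> C * \<bar>B - A\<bar> powr (\<beta> - \<beta>') * \<bar>s - t\<bar> powr \<beta>'"
      using C(2)[OF st] mult_left_mono[OF _ C(1)] by (fastforce simp: mult.assoc)
  qed (use C in simp)
qed

lemma lipschitz_on_imp_holder_on_Icc:
  assumes "L-lipschitz_on {A..B} f" "0 < \<beta>" "\<beta> \<le> 1"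
  shows "holder_on {A..B} \<beta> f"
proof (rule holder_onI[of "L * \<bar>B - A\<bar> powr (1 - \<beta>)"])
  have L: "0 \<le> L" "\<And>s t. s \<in> {A..B} \<Longrightarrow> t \<in> {A..B} \<Longrightarrow> \<bar>f s - f t\<bar> \<le> L * \<bar>s - t\<bar>"
    using assms(1) by (auto simp: lipschitz_on_def dist_real_def)
  then show "0 \<le> L * \<bar>B - A\<bar> powr (1 - \<beta>)" by simp
  fix s t assume st: "s \<in> {A..B}" "t \<in> {A..B}"
  have "\<bar>s - t\<bar> = \<bar>s - t\<bar> powr (1 - \<beta>) * \<bar>s - t\<bar> powr \<beta>"
    by (cases "s = t") (simp_all add: powr_add[symmetric])
  also have "\<dots> \<le> \<bar>B - A\<bar> powr (1 - \<beta>) * \<bar>s - t\<bar> powr \<beta>"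
    using st assms by (intro mult_right_mono powr_mono2) auto
  finally show "\<bar>f s - f t\<bar> \<le> L * \<bar>B - A\<bar> powr (1 - \<beta>) * \<bar>s - t\<bar> powr \<beta>"
    using L(2)[OF st] mult_left_mono[OF _ L(1)] by (fastforce simp: mult.assoc)
qed

lemma holder_on_compose_lipschitz:
  assumes F: "holder_on T \<beta> F" and "0 \<le> \<beta>" and maps: "\<phi> ` S \<subseteq> T" and \<phi>: "L-lipschitz_on S \<phi>"
  shows "holder_on S \<beta> (\<lambda>t. F (\<phi> t))"
proof -
  obtain C where C: "0 \<le> C" "\<And>s t. s \<in> T \<Longrightarrow> t \<in> T \<Longrightarrow> \<bar>F s - F t\<bar> \<le> C * \<bar>s - t\<bar> powr \<beta>"
    using F unfolding holder_on_def by blast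
  have L: "0 \<le> L" "\<And>s t. s \<in> S \<Longrightarrow> t \<in> S \<Longrightarrow> \<bar>\<phi> s - \<phi> t\<bar> \<le> L * \<bar>s - t\<bar>"
    using \<phi> by (auto simp: lipschitz_on_def dist_real_def)
  show ?thesis
  proof (rule holder_onI[of "C * L powr \<beta>"])
    fix s t assume st: "s \<in> S" "t \<in> S"
    have "\<bar>\<phi> s - \<phi> t\<bar> powr \<beta> \<le> (L * \<bar>s - t\<bar>) powr \<beta>"
      using L(2)[OF st] \<open>0 \<le> \<beta>\<close> by (intro powr_mono2) auto
    also have "\<dots> = L powr \<beta> * \<bar>s - t\<bar> powr \<beta>" using L(1) by (simp add: powr_mult)
    finally show "\<bar>F (\<phi> s) - F (\<phi> t)\<bar> \<le> C * L powr \<beta> * \<bar>s - t\<bar> powr \<beta>"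
      using C(2)[of "\<phi> s" "\<phi> t"] st maps mult_left_mono[OF _ C(1)] by (fastforce simp: mult.assoc)
  qed (use C L in simp)
qed

lemma locally_holder_on_atLeast:
  "(\<And>b. holder_on {A..b} \<beta> f) \<Longrightarrow> locally_holder_on {A..} \<beta> f"
  unfolding locally_holder_on_def holder_on_def by (meson Int_iff atLeastAtMost_iff atLeast_iff)

lemma locally_holder_on_UNIV:
  "(\<And>a b. holder_on {a..b} \<beta> f) \<Longrightarrow> locally_holder_on UNIV \<beta> f"
  unfolding locally_holder_on_def holder_on_def by (metis Int_UNIV_left)

section \<open>Riemann--Stieltjes integrals with continuously differentiable integrands\<close>

text \<open>One term of a Riemann--Stieltjes sum differs from the integration-by-parts expression on
  its interval by the integrals of (g u - g x) f' u over [x, \<xi>] and of (g u - g y) f' u over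
  [\<xi>, y].\<close>

lemma RS_sum_term_bound:
  fixes f g f' :: "real \<Rightarrow> real"
  assumes "x \<le> \<xi>" "\<xi> \<le> y"
    and g: "continuous_on {x..y} g"
    and f: "\<And>u. u \<in> {x..y} \<Longrightarrow> (f has_real_derivative f' u) (at u)" and f': "continuous_on {x..y} f'"
    and \<eta>: "\<And>u. u \<in> {x..y} \<Longrightarrow> \<bar>g u - g x\<bar> \<le> \<eta> \<and> \<bar>g u - g y\<bar> \<le> \<eta>"
    and K: "\<And>u. u \<in> {x..y} \<Longrightarrow> \<bar>f' u\<bar> \<le> K"
  shows "\<bar>f \<xi> * (g y - g x) - (f y * g y - f x * g x - integral {x..y} (\<lambda>u. g u * f' u))\<bar>
           \<le> \<eta> * K * (y - x)"
proof -
  define h where "h u = g u * f' u" for u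
  have ftc: "(f' has_integral (f q - f p)) {p..q}" if "x \<le> p" "p \<le> q" "q \<le> y" for p q
    using that by (intro fundamental_theorem_of_calculus)
      (auto intro!: has_field_derivative_at_within f simp: has_real_derivative_iff_has_vector_derivative[symmetric])
  have hi: "h integrable_on {x..y}"
    unfolding h_def by (intro integrable_continuous_interval continuous_intros g f')
  have nonneg: "0 \<le> \<eta>" "0 \<le> K"
    using \<eta>[of x] K[of x] assms(1,2) by (auto intro: order_trans[OF abs_ge_zero])
  have bound: "\<bar>integral {p..q} h - g r * (f q - f p)\<bar> \<le> \<eta> * K * (q - p)"
    if pq: "x \<le> p" "p \<le> q" "q \<le> y" and r: "r = x \<or> r = y" for p q r
  proof -
    have "((\<lambda>u. h u - g r * f' u) has_integral integral {p..q} h - g r * (f q - f p)) {p..q}"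
      using pq integrable_subinterval_real[OF hi, of p q]
      by (intro has_integral_diff has_integral_mult_right ftc) auto
    then have i: "((\<lambda>u. (g u - g r) * f' u) has_integral integral {p..q} h - g r * (f q - f p)) {p..q}"
      by (simp add: h_def algebra_simps)
    have "norm (integral {p..q} h - g r * (f q - f p)) \<le> \<eta> * K * Henstock_Kurzweil_Integration.content {p..q}"
    proof (rule has_integral_bound_real[OF _ _ i, where S="{}"])
      show "0 \<le> \<eta> * K" using nonneg by simp
      fix u assume "u \<in> {p..q} - {}"
      then have "u \<in> {x..y}" using pq by auto
      then show "norm ((g u - g r) * f' u) \<le> \<eta> * K"
        using \<eta> K r nonneg by (auto simp: abs_mult intro!: mult_mono)
    qed simp
    then show ?thesis using pq by simp
  qed
  have "integral {x..\<xi>} h + integral {\<xi>..y} h = integral {x..y} h"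
    using Henstock_Kurzweil_Integration.integral_combine[OF assms(1,2) hi] .
  then have "f \<xi> * (g y - g x) - (f y * g y - f x * g x - integral {x..y} h)
      = (integral {x..\<xi>} h - g x * (f \<xi> - f x)) + (integral {\<xi>..y} h - g y * (f y - f \<xi>))"
    by (simp add: algebra_simps)
  also have "\<bar>\<dots>\<bar> \<le> \<eta> * K * (\<xi> - x) + \<eta> * K * (y - \<xi>)"
    using bound[of x \<xi> x] bound[of \<xi> y y] assms(1,2) by (intro abs_triangle_ineq[THEN order_trans] add_mono) auto
  finally show ?thesis unfolding h_def by (simp add: algebra_simps)
qed

lemma partition_le:
  fixes x :: "nat \<Rightarrow> real"
  assumes "\<forall>i<n. x i < x (Suc i)" "i \<le> j" "j \<le> n"
  shows "x i \<le> x j"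
  using assms(2,3)
proof (induction j)
  case (Suc j)
  then show ?case
    using assms(1) by (cases "i = Suc j") (auto intro: order_trans[OF _ less_imp_le])
qed simp

lemma RS_sum_by_parts_error:
  fixes x \<xi> :: "nat \<Rightarrow> real" and f g f' :: "real \<Rightarrow> real"
  assumes partition: "x 0 = a" "x n = b" "\<And>i. i < n \<Longrightarrow> x i < x (Suc i) \<and> x i \<le> \<xi> i \<and> \<xi> i \<le> x (Suc i)"
    and g: "continuous_on {a..b} g"
    and f: "\<And>u. u \<in> {a..b} \<Longrightarrow> (f has_real_derivative f' u) (at u)" and f': "continuous_on {a..b} f'"
    and K: "\<And>u. u \<in> {a..b} \<Longrightarrow> \<bar>f' u\<bar> \<le> K"
    and osc: "\<And>i u. i < n \<Longrightarrow> u \<in> {x i..x (Suc i)} \<Longrightarrow> \<bar>g u - g (x i)\<bar> \<le> \<eta> \<and> \<bar>g u - g (x (Suc i))\<bar> \<le> \<eta>"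
  shows "\<bar>(\<Sum>i<n. f (\<xi> i) * (g (x (Suc i)) - g (x i))) - (f b * g b - f a * g a - integral {a..b} (\<lambda>u. g u * f' u))\<bar>
           \<le> \<eta> * K * (b - a)"
proof -
  define h where "h = (\<lambda>u. g u * f' u)"
  have hi: "h integrable_on {a..b}"
    unfolding h_def by (intro integrable_continuous_interval continuous_intros g f')
  have x: "x i \<in> {a..b}" if "i \<le> n" for i
    using partition_le[of n x 0 i] partition_le[of n x i n] that partition by auto
  define F where "F t = f t * g t - integral {a..t} h" for t
  have step: "\<bar>f (\<xi> i) * (g (x (Suc i)) - g (x i)) - (F (x (Suc i)) - F (x i))\<bar>
      \<le> \<eta> * K * (x (Suc i) - x i)" if i: "i < n" for i
  proof -
    have sub: "{x i..x (Suc i)} \<subseteq> {a..b}" using x[of i] x[of "Suc i"] i by auto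
    have "integral {a..x i} h + integral {x i..x (Suc i)} h = integral {a..x (Suc i)} h"
      using Henstock_Kurzweil_Integration.integral_combine[of a "x i" "x (Suc i)" h]
        integrable_subinterval_real[OF hi, of a "x (Suc i)"] x[of i] x[of "Suc i"] partition(3)[OF i] i
      by auto
    then have "F (x (Suc i)) - F (x i) =
        f (x (Suc i)) * g (x (Suc i)) - f (x i) * g (x i) - integral {x i..x (Suc i)} h"
      unfolding F_def by (simp add: algebra_simps)
    moreover have "\<bar>f (\<xi> i) * (g (x (Suc i)) - g (x i)) - (f (x (Suc i)) * g (x (Suc i)) - f (x i) * g (x i)
        - integral {x i..x (Suc i)} h)\<bar> \<le> \<eta> * K * (x (Suc i) - x i)"
      unfolding h_def
    proof (rule RS_sum_term_bound)
      show "x i \<le> \<xi> i" "\<xi> i \<le> x (Suc i)" using partition(3)[OF i] by auto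
      show "continuous_on {x i..x (Suc i)} g" "continuous_on {x i..x (Suc i)} f'"
        using continuous_on_subset[OF g sub] continuous_on_subset[OF f' sub] .
      fix u assume u: "u \<in> {x i..x (Suc i)}"
      then show "(f has_real_derivative f' u) (at u)" "\<bar>f' u\<bar> \<le> K" using f K sub by auto
      show "\<bar>g u - g (x i)\<bar> \<le> \<eta> \<and> \<bar>g u - g (x (Suc i))\<bar> \<le> \<eta>" using osc[OF i u] .
    qed
    ultimately show ?thesis by simp
  qed
  have "f b * g b - f a * g a - integral {a..b} h = F (x n) - F (x 0)"
    using partition by (simp add: F_def)
  also have "\<dots> = (\<Sum>i<n. F (x (Suc i)) - F (x i))"
    by (rule sum_lessThan_telescope[symmetric])
  finally have "f b * g b - f a * g a - integral {a..b} h = (\<Sum>i<n. F (x (Suc i)) - F (x i))" .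
  then have "\<bar>(\<Sum>i<n. f (\<xi> i) * (g (x (Suc i)) - g (x i))) - (f b * g b - f a * g a - integral {a..b} h)\<bar>
      = \<bar>\<Sum>i<n. f (\<xi> i) * (g (x (Suc i)) - g (x i)) - (F (x (Suc i)) - F (x i))\<bar>"
    by (simp add: sum_subtractf)
  also have "\<dots> \<le> (\<Sum>i<n. \<eta> * K * (x (Suc i) - x i))"
    by (intro sum_abs[THEN order_trans] sum_mono step) simp
  also have "\<dots> = \<eta> * K * (b - a)"
    using partition by (simp add: sum_distrib_left[symmetric] sum_lessThan_telescope)
  finally show ?thesis unfolding h_def .
qed

lemma has_RS_integral_by_parts:
  fixes f g f' :: "real \<Rightarrow> real"
  assumes "a \<le> b" and g: "continuous_on {a..b} g"
    and f: "\<And>u. u \<in> {a..b} \<Longrightarrow> (f has_real_derivative f' u) (at u)" and f': "continuous_on {a..b} f'"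
  shows "has_RS_integral f g a b (f b * g b - f a * g a - integral {a..b} (\<lambda>u. g u * f' u))"
  unfolding has_RS_integral_def
proof (intro allI impI)
  fix e :: real assume "0 < e"
  obtain K where K: "0 \<le> K" "\<And>u. u \<in> {a..b} \<Longrightarrow> \<bar>f' u\<bar> \<le> K"
    using continuous_on_compact_bound[OF compact_Icc f'] by (metis real_norm_def)
  define \<eta> where "\<eta> = e / (2 * (K * (b - a) + 1))"
  have KD: "0 \<le> K * (b - a)" using K(1) \<open>a \<le> b\<close> by simp
  have "\<eta> * (K * (b - a)) < e"
  proof -
    have "e * (K * (b - a)) < e * (2 * (K * (b - a) + 1))"
      using \<open>0 < e\<close> KD by (intro mult_strict_left_mono) auto
    then show ?thesis using KD by (simp add: \<eta>_def divide_less_eq)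
  qed
  have "0 < \<eta>" unfolding \<eta>_def using \<open>0 < e\<close> KD by simp
  then obtain d where "0 < d" and
    d: "\<And>u v. u \<in> {a..b} \<Longrightarrow> v \<in> {a..b} \<Longrightarrow> dist v u < d \<Longrightarrow> dist (g v) (g u) < \<eta>"
    using compact_uniformly_continuous[OF g compact_Icc] unfolding uniformly_continuous_on_def by metis
  show "\<exists>d>0. \<forall>(n::nat) (x::nat \<Rightarrow> real) (\<xi>::nat \<Rightarrow> real).
        (x 0 = a \<and> x n = b \<and>
         (\<forall>i<n. x i < x (Suc i) \<and> x (Suc i) - x i < d \<and> x i \<le> \<xi> i \<and> \<xi> i \<le> x (Suc i)))
        \<longrightarrow> \<bar>(\<Sum>i<n. f (\<xi> i) * (g (x (Suc i)) - g (x i))) -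
             (f b * g b - f a * g a - integral {a..b} (\<lambda>u. g u * f' u))\<bar> < e"
  proof (intro exI[of _ d] conjI \<open>0 < d\<close> allI impI)
    fix n :: nat and x \<xi> :: "nat \<Rightarrow> real"
    assume P: "x 0 = a \<and> x n = b \<and>
         (\<forall>i<n. x i < x (Suc i) \<and> x (Suc i) - x i < d \<and> x i \<le> \<xi> i \<and> \<xi> i \<le> x (Suc i))"
    have x: "x i \<in> {a..b}" if "i \<le> n" for i
      using partition_le[of n x 0 i] partition_le[of n x i n] that P by auto
    have "\<bar>(\<Sum>i<n. f (\<xi> i) * (g (x (Suc i)) - g (x i))) -
        (f b * g b - f a * g a - integral {a..b} (\<lambda>u. g u * f' u))\<bar> \<le> \<eta> * K * (b - a)"
    proof (rule RS_sum_by_parts_error[OF _ _ _ g f f' K(2)])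
      fix i u assume "i < n" "u \<in> {x i..x (Suc i)}"
      then show "\<bar>g u - g (x i)\<bar> \<le> \<eta> \<and> \<bar>g u - g (x (Suc i))\<bar> \<le> \<eta>"
        using d[of "x i" u] d[of "x (Suc i)" u] x[of i] x[of "Suc i"] P
        by (auto simp: dist_real_def)
    qed (use P in auto)
    with \<open>\<eta> * (K * (b - a)) < e\<close> show "\<bar>(\<Sum>i<n. f (\<xi> i) * (g (x (Suc i)) - g (x i))) -
        (f b * g b - f a * g a - integral {a..b} (\<lambda>u. g u * f' u))\<bar> < e"
      by (simp add: mult.assoc)
  qed
qed

lemma has_RS_integral_unique:
  assumes "a \<le> b" and I: "has_RS_integral f g a b I" and J: "has_RS_integral f g a b J"
  shows "I = J"
proof (rule ccontr)
  assume "I \<noteq> J"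
  define e where "e = \<bar>I - J\<bar> / 2"
  have "0 < e" using \<open>I \<noteq> J\<close> unfolding e_def by simp
  obtain d1 where "0 < d1" and d1: "\<forall>n x \<xi>. x 0 = a \<and> x n = b \<and>
         (\<forall>i<n. x i < x (Suc i) \<and> x (Suc i) - x i < d1 \<and> x i \<le> \<xi> i \<and> \<xi> i \<le> x (Suc i))
        \<longrightarrow> \<bar>(\<Sum>i<n. f (\<xi> i) * (g (x (Suc i)) - g (x i))) - I\<bar> < e"
    using I[unfolded has_RS_integral_def, rule_format, OF \<open>0 < e\<close>] by blast
  obtain d2 where "0 < d2" and d2: "\<forall>n x \<xi>. x 0 = a \<and> x n = b \<and>
         (\<forall>i<n. x i < x (Suc i) \<and> x (Suc i) - x i < d2 \<and> x i \<le> \<xi> i \<and> \<xi> i \<le> x (Suc i))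
        \<longrightarrow> \<bar>(\<Sum>i<n. f (\<xi> i) * (g (x (Suc i)) - g (x i))) - J\<bar> < e"
    using J[unfolded has_RS_integral_def, rule_format, OF \<open>0 < e\<close>] by blast
  define d where "d = min d1 d2"
  obtain n x where P: "x 0 = a \<and> x n = b \<and> (\<forall>i<n. x i < x (Suc i) \<and> x (Suc i) - x i < d)"
  proof (cases "a = b")
    case True
    then show ?thesis using that[of "\<lambda>_. a" 0] by simp
  next
    case False
    have "0 < d" using \<open>0 < d1\<close> \<open>0 < d2\<close> by (simp add: d_def)
    obtain n :: nat where n: "(b - a) / d < real n" using reals_Archimedean2 by blast
    have "0 < (b - a) / d" using False \<open>a \<le> b\<close> \<open>0 < d\<close> by simp
    then have "0 < n" using n by linarith
    have step: "0 < (b - a) / real n" "(b - a) / real n < d"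
      using False \<open>a \<le> b\<close> \<open>0 < n\<close> n \<open>0 < d\<close> by (auto simp: field_simps)
    define x where "x i = a + real i * ((b - a) / real n)" for i
    have "x (Suc i) - x i = (b - a) / real n" for i using \<open>0 < n\<close> by (simp add: x_def field_simps)
    then have "\<forall>i<n. x i < x (Suc i) \<and> x (Suc i) - x i < d" using step by (metis diff_gt_0_iff_gt)
    moreover have "x 0 = a" "x n = b" using \<open>0 < n\<close> by (auto simp: x_def)
    ultimately show ?thesis by (intro that[of x n]) auto
  qed
  have "\<bar>(\<Sum>i<n. f (x i) * (g (x (Suc i)) - g (x i))) - I\<bar> < e"
    using d1[rule_format, of x n x] P by (force simp: d_def)
  moreover have "\<bar>(\<Sum>i<n. f (x i) * (g (x (Suc i)) - g (x i))) - J\<bar> < e"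
    using d2[rule_format, of x n x] P by (force simp: d_def)
  ultimately have "\<bar>I - J\<bar> < 2 * e" by linarith
  then show False unfolding e_def by simp
qed

lemma RS_integral_by_parts:
  fixes f g f' :: "real \<Rightarrow> real"
  assumes "a \<le> b" and g: "continuous_on {a..b} g"
    and f: "\<And>u. u \<in> {a..b} \<Longrightarrow> (f has_real_derivative f' u) (at u)" and f': "continuous_on {a..b} f'"
  shows "RS_integral f g a b = f b * g b - f a * g a - integral {a..b} (\<lambda>u. g u * f' u)"
proof -
  have I: "has_RS_integral f g a b (f b * g b - f a * g a - integral {a..b} (\<lambda>u. g u * f' u))"
    using assms by (rule has_RS_integral_by_parts)
  show ?thesis
    unfolding RS_integral_def using I has_RS_integral_unique[OF \<open>a \<le> b\<close> _ I] by (rule the_equality)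
qed

lemma RS_integral_combine:
  fixes f g f' :: "real \<Rightarrow> real"
  assumes "a \<le> c" "c \<le> b" and g: "continuous_on {a..b} g"
    and f: "\<And>u. u \<in> {a..b} \<Longrightarrow> (f has_real_derivative f' u) (at u)" and f': "continuous_on {a..b} f'"
  shows "RS_integral f g a b = RS_integral f g a c + RS_integral f g c b"
proof -
  have by_parts: "RS_integral f g p q = f q * g q - f p * g p - integral {p..q} (\<lambda>u. g u * f' u)"
    if "a \<le> p" "p \<le> q" "q \<le> b" for p q
    using that by (intro RS_integral_by_parts continuous_on_subset[OF g] continuous_on_subset[OF f'] f) auto
  have "(\<lambda>u. g u * f' u) integrable_on {a..b}"
    by (intro integrable_continuous_interval continuous_intros g f')
  then have "integral {a..c} (\<lambda>u. g u * f' u) + integral {c..b} (\<lambda>u. g u * f' u) = integral {a..b} (\<lambda>u. g u * f' u)"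
    using Henstock_Kurzweil_Integration.integral_combine assms(1,2) by blast
  then show ?thesis using by_parts[of a b] by_parts[of a c] by_parts[of c b] assms(1,2) by simp
qed

lemma lipschitz_on_Icc_if_continuous_deriv:
  fixes f f' :: "real \<Rightarrow> real"
  assumes "\<And>u. u \<in> {a..b} \<Longrightarrow> (f has_real_derivative f' u) (at u within {a..b})" "continuous_on {a..b} f'"
  obtains L where "L-lipschitz_on {a..b} f"
proof -
  obtain K where K: "0 \<le> K" "\<And>u. u \<in> {a..b} \<Longrightarrow> norm (f' u) \<le> K"
    using continuous_on_compact_bound[OF compact_Icc assms(2)] by blast
  have "dist (f x) (f y) \<le> K * dist x y" if "x \<in> {a..b}" "y \<in> {a..b}" for x y
    using field_differentiable_bound[of "{a..b}" f f' K x y] assms(1) K(2) that by (simp add: dist_norm)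
  then have "K-lipschitz_on {a..b} f"
    using K(1) by (intro lipschitz_onI)
  then show ?thesis by (rule that)
qed

lemma holder_on_Icc_if_continuous_deriv:
  fixes f f' :: "real \<Rightarrow> real"
  assumes "\<And>u. u \<in> {a..b} \<Longrightarrow> (f has_real_derivative f' u) (at u within {a..b})" "continuous_on {a..b} f'"
    and "0 < \<beta>" "\<beta> \<le> 1"
  shows "holder_on {a..b} \<beta> f"
proof -
  obtain L where "L-lipschitz_on {a..b} f"
    by (rule lipschitz_on_Icc_if_continuous_deriv[OF assms(1,2)])
  then show ?thesis using assms(3,4) by (rule lipschitz_on_imp_holder_on_Icc)
qed

lemma holder_on_RS_integral:
  fixes f g f' :: "real \<Rightarrow> real"
  assumes f: "\<And>u. u \<in> {A..B} \<Longrightarrow> (f has_real_derivative f' u) (at u)" and f': "continuous_on {A..B} f'"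
    and g: "holder_on {A..B} \<beta> g" and "0 < \<beta>" "\<beta> \<le> 1"
  shows "holder_on {A..B} \<beta> (\<lambda>t. RS_integral f g A t)"
proof -
  have gc: "continuous_on {A..B} g" using holder_on_imp_continuous_on[OF g \<open>0 < \<beta>\<close>] .
  have hc: "continuous_on {A..B} (\<lambda>u. g u * f' u)" by (intro continuous_intros gc f')
  have "holder_on {A..B} \<beta> (\<lambda>t. f t * g t - f A * g A - integral {A..t} (\<lambda>u. g u * f' u))"
  proof (intro holder_on_diff holder_on_const holder_on_mult g)
    have "\<And>u. u \<in> {A..B} \<Longrightarrow> (f has_real_derivative f' u) (at u within {A..B})"
      using f by (simp add: has_field_derivative_at_within)
    then show "holder_on {A..B} \<beta> f"
      using f' assms(4,5) by (rule holder_on_Icc_if_continuous_deriv)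
    show "holder_on {A..B} \<beta> (\<lambda>t. integral {A..t} (\<lambda>u. g u * f' u))"
      using integral_has_real_derivative[OF hc] hc assms(4,5) by (rule holder_on_Icc_if_continuous_deriv)
  qed (use assms(4) in simp)
  moreover have "RS_integral f g A t = f t * g t - f A * g A - integral {A..t} (\<lambda>u. g u * f' u)"
    if "t \<in> {A..B}" for t
    using that f by (intro RS_integral_by_parts continuous_on_subset[OF gc] continuous_on_subset[OF f']) auto
  ultimately show ?thesis by (rule holder_on_eq[OF _ sym])
qed

section \<open>Hoelder continuity from dyadic increments\<close>

definition dyadic_floor :: "nat \<Rightarrow> real \<Rightarrow> real" where
  "dyadic_floor m x = real (nat \<lfloor>x * 2^m\<rfloor>) / 2^m"

lemma dyadic_floor_bounds:
  assumes "0 \<le> x"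
  shows "0 \<le> dyadic_floor m x" "dyadic_floor m x \<le> x" "x - dyadic_floor m x < (1/2)^m"
proof -
  have k: "real (nat \<lfloor>x * 2^m\<rfloor>) \<le> x * 2^m" "x * 2^m < real (nat \<lfloor>x * 2^m\<rfloor>) + 1"
  proof -
    have "0 \<le> x * 2^m" using assms by simp
    then show "real (nat \<lfloor>x * 2^m\<rfloor>) \<le> x * 2^m" "x * 2^m < real (nat \<lfloor>x * 2^m\<rfloor>) + 1"
      by linarith+
  qed
  show "0 \<le> dyadic_floor m x" unfolding dyadic_floor_def by simp
  show "dyadic_floor m x \<le> x" unfolding dyadic_floor_def using k by (simp add: divide_le_eq)
  have "x - dyadic_floor m x = (x * 2^m - real (nat \<lfloor>x * 2^m\<rfloor>)) / 2^m"
    unfolding dyadic_floor_def by (simp add: field_simps)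
  also have "\<dots> < 1 / 2^m"
    using k(2) by (intro divide_strict_right_mono) (simp_all add: algebra_simps)
  finally show "x - dyadic_floor m x < (1/2)^m" by (simp add: power_one_over)
qed

lemma dyadic_floor_tendsto:
  assumes "0 \<le> x"
  shows "(\<lambda>m. dyadic_floor m x) \<longlonglongrightarrow> x"
proof (rule tendsto_sandwich[where f="\<lambda>m. x - (1/2)^m" and h="\<lambda>m. x"])
  show "\<forall>\<^sub>F m in sequentially. x - (1/2)^m \<le> dyadic_floor m x"
    using dyadic_floor_bounds(3)[OF assms] by (simp add: less_imp_le algebra_simps)
  show "\<forall>\<^sub>F m in sequentially. dyadic_floor m x \<le> x"
    using dyadic_floor_bounds(2)[OF assms] by simp
  show "(\<lambda>m. x - (1/2::real)^m) \<longlonglongrightarrow> x"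
    using tendsto_diff[OF tendsto_const[of x] LIMSEQ_power_zero[of "1/2::real"]] by simp
qed simp

lemma nat_floor_double_cases:
  fixes y :: real
  assumes "0 \<le> y"
  shows "nat \<lfloor>2 * y\<rfloor> = 2 * nat \<lfloor>y\<rfloor> \<or> nat \<lfloor>2 * y\<rfloor> = 2 * nat \<lfloor>y\<rfloor> + 1"
  using assms by linarith

lemma dyadic_scale_exists:
  fixes d :: real
  assumes "0 < d" "d \<le> (1/2)^n0"
  obtains n where "n0 \<le> n" "(1/2)^Suc n < d" "d \<le> (1/2)^n"
proof -
  obtain m where "(1/2::real)^m < d" using real_arch_pow_inv[of d "1/2"] assms(1) by auto
  define n' where "n' = (LEAST m. (1/2::real)^m < d)"
  have n': "(1/2::real)^n' < d" unfolding n'_def by (rule LeastI) fact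
  have "n0 < n'"
  proof (rule ccontr)
    assume "\<not> n0 < n'"
    then have "(1/2::real)^n0 \<le> (1/2)^n'" by (intro power_decreasing) auto
    with n' assms(2) show False by linarith
  qed
  then obtain n where n: "n' = Suc n" "n0 \<le> n" by (cases n') auto
  have "d \<le> (1/2)^n"
  proof (rule ccontr)
    assume "\<not> d \<le> (1/2)^n"
    then have "n' \<le> n" unfolding n'_def by (intro Least_le) simp
    with n(1) show False by simp
  qed
  with n n' show ?thesis by (intro that) auto
qed

locale dyadic_increments =
  fixes f :: "real \<Rightarrow> real" and N :: nat and \<beta> :: real and n0 :: nat
  assumes continuous: "continuous_on {0..real N} f" and exponent_pos: "0 < \<beta>"
    and increment: "\<And>n k. n0 \<le> n \<Longrightarrow> k < N * 2^n \<Longrightarrow>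
      \<bar>f ((real k + 1) / 2^n) - f (real k / 2^n)\<bar> \<le> ((1/2)^n) powr \<beta>"
begin

definition ratio :: real where "ratio = (1/2) powr \<beta>"

lemma ratio_bounds: "0 < ratio" "ratio < 1"
  unfolding ratio_def using exponent_pos by (auto simp: powr01_less_one)

lemma half_power_powr: "((1/2)^n) powr \<beta> = ratio ^ n"
  unfolding ratio_def by (simp add: powr_realpow[symmetric] powr_powr powr_power mult.commute)

lemma increment_dyadic_floor_Suc:
  assumes x: "x \<in> {0..real N}" and "n0 \<le> m"
  shows "\<bar>f (dyadic_floor (Suc m) x) - f (dyadic_floor m x)\<bar> \<le> ratio ^ Suc m"
proof -
  let ?k = "nat \<lfloor>x * 2^m\<rfloor>"
  have split: "nat \<lfloor>x * 2^Suc m\<rfloor> = 2 * ?k \<or> nat \<lfloor>x * 2^Suc m\<rfloor> = 2 * ?k + 1"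
    using nat_floor_double_cases[of "x * 2^m"] x by (simp add: mult_ac)
  have "dyadic_floor m x = real (2 * ?k) / 2^Suc m" unfolding dyadic_floor_def by simp
  with split show ?thesis
  proof (elim disjE)
    assume k': "nat \<lfloor>x * 2^Suc m\<rfloor> = 2 * ?k + 1"
    have "real (2 * ?k + 1) \<le> x * 2^Suc m" using k' x by linarith
    also have "\<dots> \<le> real (N * 2^Suc m)" using x by (simp add: mult_right_mono)
    finally have "2 * ?k < N * 2^Suc m" by linarith
    moreover have "dyadic_floor (Suc m) x = (real (2 * ?k) + 1) / 2^Suc m"
      unfolding dyadic_floor_def k' by simp
    moreover assume "dyadic_floor m x = real (2 * ?k) / 2^Suc m"
    ultimately show ?thesis
      using increment[of "Suc m" "2 * ?k"] \<open>n0 \<le> m\<close> unfolding half_power_powr by simp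
  qed (use ratio_bounds in \<open>simp add: dyadic_floor_def\<close>)
qed

lemma increment_dyadic_floor_le:
  assumes x: "x \<in> {0..real N}" and "n0 \<le> n"
  shows "\<bar>f (dyadic_floor (n + j) x) - f (dyadic_floor n x)\<bar> \<le> ratio ^ Suc n / (1 - ratio)"
proof -
  have "\<bar>f (dyadic_floor (n + j) x) - f (dyadic_floor n x)\<bar> \<le> (\<Sum>i<j. ratio ^ Suc (n + i))"
  proof (induction j)
    case (Suc j)
    have "\<bar>f (dyadic_floor (Suc (n + j)) x) - f (dyadic_floor (n + j) x)\<bar> \<le> ratio ^ Suc (n + j)"
      using increment_dyadic_floor_Suc[OF x] \<open>n0 \<le> n\<close> by simp
    with Suc.IH show ?case by simp
  qed simp
  also have "\<dots> = ratio ^ Suc n * (\<Sum>i<j. ratio ^ i)"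
    by (simp add: sum_distrib_left power_add mult.assoc)
  also have "\<dots> = ratio ^ Suc n * ((1 - ratio ^ j) / (1 - ratio))"
    using ratio_bounds by (simp add: sum_gp_strict)
  also have "\<dots> \<le> ratio ^ Suc n / (1 - ratio)"
    using ratio_bounds by (simp add: field_simps)
  finally show ?thesis .
qed

lemma dist_dyadic_floor_le:
  assumes x: "x \<in> {0..real N}" and "n0 \<le> n"
  shows "\<bar>f x - f (dyadic_floor n x)\<bar> \<le> ratio ^ Suc n / (1 - ratio)"
proof -
  have "(\<lambda>m. f (dyadic_floor m x)) \<longlonglongrightarrow> f x"
  proof (rule continuous_on_tendsto_compose[OF continuous dyadic_floor_tendsto x])
    show "\<forall>\<^sub>F m in sequentially. dyadic_floor m x \<in> {0..real N}"
    proof (intro always_eventually allI)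
      fix m show "dyadic_floor m x \<in> {0..real N}" using dyadic_floor_bounds(1,2)[of x m] x by auto
    qed
  qed (use x in simp)
  then have "(\<lambda>m. \<bar>f (dyadic_floor m x) - f (dyadic_floor n x)\<bar>) \<longlonglongrightarrow> \<bar>f x - f (dyadic_floor n x)\<bar>"
    by (intro tendsto_intros)
  then show ?thesis
  proof (rule LIMSEQ_le_const2, intro exI[of _ n] allI impI)
    fix m assume "n \<le> m"
    then show "\<bar>f (dyadic_floor m x) - f (dyadic_floor n x)\<bar> \<le> ratio ^ Suc n / (1 - ratio)"
      using increment_dyadic_floor_le[OF x \<open>n0 \<le> n\<close>, of "m - n"] by simp
  qed
qed

lemma increment_le_at_scale:
  assumes s: "s \<in> {0..real N}" and t: "t \<in> {0..real N}" and "s < t" and "n0 \<le> n"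
    and lo: "(1/2)^Suc n < t - s" and hi: "t - s \<le> (1/2)^n"
  shows "\<bar>f t - f s\<bar> \<le> (2 / (1 - ratio) + 1) * 2 powr \<beta> * (t - s) powr \<beta>"
proof -
  let ?ks = "nat \<lfloor>s * 2^n\<rfloor>" and ?kt = "nat \<lfloor>t * 2^n\<rfloor>"
  have "0 \<le> s * 2^n" "0 \<le> t * 2^n" using s t by auto
  moreover have "s * 2^n < t * 2^n" "t * 2^n \<le> s * 2^n + 1"
    using \<open>s < t\<close> hi by (simp_all add: power_one_over field_simps)
  ultimately have ks: "?kt = ?ks \<or> ?kt = ?ks + 1" by linarith
  have mid: "\<bar>f (dyadic_floor n t) - f (dyadic_floor n s)\<bar> \<le> ratio ^ n"
    using ks
  proof (elim disjE)
    assume kt: "?kt = ?ks + 1"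
    have "real (?ks + 1) \<le> t * 2^n" using kt \<open>0 \<le> t * 2^n\<close> by linarith
    also have "\<dots> \<le> real (N * 2^n)" using t by (simp add: mult_right_mono)
    finally have "?ks < N * 2^n" by linarith
    then show ?thesis
      using increment[of n ?ks] \<open>n0 \<le> n\<close> unfolding dyadic_floor_def kt half_power_powr by (simp add: add.commute)
  qed (use ratio_bounds in \<open>simp add: dyadic_floor_def\<close>)
  have "\<bar>f t - f s\<bar> \<le> \<bar>f t - f (dyadic_floor n t)\<bar> + \<bar>f (dyadic_floor n t) - f (dyadic_floor n s)\<bar>
      + \<bar>f s - f (dyadic_floor n s)\<bar>" by simp
  also have "\<dots> \<le> ratio ^ n / (1 - ratio) + ratio ^ n + ratio ^ n / (1 - ratio)"
  proof -
    have "ratio ^ Suc n / (1 - ratio) \<le> ratio ^ n / (1 - ratio)"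
      using ratio_bounds by (intro divide_right_mono) (auto simp: mult_left_le_one_le)
    then show ?thesis
      using dist_dyadic_floor_le[OF t \<open>n0 \<le> n\<close>] dist_dyadic_floor_le[OF s \<open>n0 \<le> n\<close>] mid by linarith
  qed
  also have "\<dots> = (2 / (1 - ratio) + 1) * ratio ^ n"
    by (simp add: field_simps)
  also have "ratio ^ n = 2 powr \<beta> * ((1/2)^Suc n) powr \<beta>"
  proof -
    have "2 powr \<beta> * ratio = 1" unfolding ratio_def by (simp add: powr_divide)
    then show ?thesis unfolding half_power_powr by (simp add: mult.assoc[symmetric])
  qed
  also have "(2 / (1 - ratio) + 1) * (2 powr \<beta> * ((1/2)^Suc n) powr \<beta>)
      \<le> (2 / (1 - ratio) + 1) * (2 powr \<beta> * (t - s) powr \<beta>)"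
    using ratio_bounds lo exponent_pos by (intro mult_left_mono powr_mono2) auto
  finally show ?thesis by (simp add: mult.assoc)
qed

lemma holder_on_Icc: "holder_on {0..real N} \<beta> f"
proof -
  define C1 where "C1 = (2 / (1 - ratio) + 1) * 2 powr \<beta>"
  obtain M where "0 \<le> M" and M: "\<And>x. x \<in> {0..real N} \<Longrightarrow> \<bar>f x\<bar> \<le> M"
    using continuous_on_compact_bound[OF compact_Icc continuous] by (metis real_norm_def)
  define \<delta> where "\<delta> = (1/2::real)^n0"
  have "0 < \<delta>" "0 \<le> C1" unfolding \<delta>_def C1_def using ratio_bounds by auto
  define C where "C = C1 + 2 * M / \<delta> powr \<beta>"
  have "0 \<le> C" unfolding C_def using \<open>0 \<le> C1\<close> \<open>0 \<le> M\<close> by simp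
  have bound: "\<bar>f t - f s\<bar> \<le> C * (t - s) powr \<beta>"
    if s: "s \<in> {0..real N}" and t: "t \<in> {0..real N}" and "s < t" for s t
  proof (cases "t - s \<le> \<delta>")
    case True
    then obtain n where "n0 \<le> n" "(1/2)^Suc n < t - s" "t - s \<le> (1/2)^n"
      using dyadic_scale_exists[of "t - s" n0] \<open>s < t\<close> unfolding \<delta>_def by auto
    then have "\<bar>f t - f s\<bar> \<le> C1 * (t - s) powr \<beta>"
      unfolding C1_def using increment_le_at_scale[OF s t \<open>s < t\<close>] by blast
    also have "\<dots> \<le> C * (t - s) powr \<beta>"
      unfolding C_def using \<open>0 \<le> M\<close> \<open>0 < \<delta>\<close> by (intro mult_right_mono) auto
    finally show ?thesis .
  next
    case False
    have "\<bar>f t - f s\<bar> \<le> 2 * M / \<delta> powr \<beta> * \<delta> powr \<beta>"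
      using M[OF s] M[OF t] \<open>0 < \<delta>\<close> by simp
    also have "\<dots> \<le> 2 * M / \<delta> powr \<beta> * (t - s) powr \<beta>"
      using False \<open>0 < \<delta>\<close> exponent_pos \<open>0 \<le> M\<close> by (intro mult_left_mono powr_mono2) auto
    also have "\<dots> \<le> C * (t - s) powr \<beta>"
      unfolding C_def using \<open>0 \<le> C1\<close> by (intro mult_right_mono) auto
    finally show ?thesis .
  qed
  show ?thesis
  proof (rule holder_onI[OF \<open>0 \<le> C\<close>])
    fix s t assume "s \<in> {0..real N}" "t \<in> {0..real N}"
    then show "\<bar>f s - f t\<bar> \<le> C * \<bar>s - t\<bar> powr \<beta>"
      using bound[of s t] bound[of t s] by (cases s t rule: linorder_cases) (auto simp: abs_minus_commute)
  qed
qed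

end

lemma AE_eventually_dyadic_increments_less:
  fixes X :: "real \<Rightarrow> 'a \<Rightarrow> real"
  assumes "prob_space M"
    and meas: "\<And>t. t \<in> {0..real N} \<Longrightarrow> X t \<in> borel_measurable M"
    and tail: "\<And>n k. k < N * 2^n \<Longrightarrow>
      measure M {\<omega>\<in>space M. ((1/2)^n) powr \<beta> \<le> \<bar>X ((real k + 1) / 2^n) \<omega> - X (real k / 2^n) \<omega>\<bar>}
        \<le> K * (1/4)^n"
  shows "AE \<omega> in M. \<forall>\<^sub>F n in sequentially.
           \<forall>k<N * 2^n. \<bar>X ((real k + 1) / 2^n) \<omega> - X (real k / 2^n) \<omega>\<bar> < ((1/2)^n) powr \<beta>"
proof -
  interpret prob_space M by fact
  define B where "B n k = {\<omega>\<in>space M. ((1/2)^n) powr \<beta> \<le> \<bar>X ((real k + 1) / 2^n) \<omega> - X (real k / 2^n) \<omega>\<bar>}"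
    for n k
  define A where "A n = (\<Union>k<N * 2^n. B n k)" for n
  have B_sets: "B n k \<in> sets M" if "k < N * 2^n" for n k
  proof -
    have "real (k + 1) \<le> real (N * 2^n)" using that by linarith
    then have "(real k + 1) / 2^n \<le> real N" by (simp add: divide_le_eq)
    moreover have "real k / 2^n \<le> (real k + 1) / 2^n" by (simp add: divide_right_mono)
    ultimately have [measurable]: "X ((real k + 1) / 2^n) \<in> borel_measurable M" "X (real k / 2^n) \<in> borel_measurable M"
      by (intro meas; simp)+
    show ?thesis unfolding B_def by measurable
  qed
  have A_sets: "A n \<in> sets M" for n unfolding A_def using B_sets by auto
  have A_le: "measure M (A n) \<le> real N * K * (1/2)^n" for n
  proof -
    have four: "(4::real)^n = 2^n * 2^n" by (simp flip: power_mult_distrib)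
    have "measure M (A n) \<le> (\<Sum>k<N * 2^n. measure M (B n k))"
      unfolding A_def using B_sets by (intro measure_UNION_le) auto
    also have "\<dots> \<le> (\<Sum>k<N * 2^n. K * (1/4)^n)"
      unfolding B_def by (intro sum_mono tail) simp
    also have "\<dots> = real N * K * (1/2)^n"
      using four by (simp add: power_one_over)
    finally show ?thesis .
  qed
  have "summable (\<lambda>n. measure M (A n))"
  proof (rule summable_comparison_test)
    show "\<exists>N'. \<forall>n\<ge>N'. norm (measure M (A n)) \<le> real N * K * (1/2)^n" using A_le by auto
  qed (intro summable_mult summable_geometric, simp)
  then have "AE \<omega> in M. \<forall>\<^sub>F n in sequentially. \<omega> \<in> space M - A n"
    by (intro borel_cantelli_AE1 A_sets) (simp add: less_top[symmetric])
  then show ?thesis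
    by (elim AE_mp, intro AE_I2 impI) (auto elim!: eventually_mono simp: A_def B_def not_le)
qed

lemma AE_holder_on_Icc_if_dyadic_tails:
  fixes X :: "real \<Rightarrow> 'a \<Rightarrow> real"
  assumes "prob_space M"
    and meas: "\<And>t. t \<in> {0..real N} \<Longrightarrow> X t \<in> borel_measurable M"
    and cont: "\<And>\<omega>. \<omega> \<in> space M \<Longrightarrow> continuous_on {0..real N} (\<lambda>t. X t \<omega>)"
    and "0 < \<beta>"
    and tail: "\<And>n k. k < N * 2^n \<Longrightarrow>
      measure M {\<omega>\<in>space M. ((1/2)^n) powr \<beta> \<le> \<bar>X ((real k + 1) / 2^n) \<omega> - X (real k / 2^n) \<omega>\<bar>}
        \<le> K * (1/4)^n"
  shows "AE \<omega> in M. holder_on {0..real N} \<beta> (\<lambda>t. X t \<omega>)"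
proof -
  have "AE \<omega> in M. \<forall>\<^sub>F n in sequentially.
      \<forall>k<N * 2^n. \<bar>X ((real k + 1) / 2^n) \<omega> - X (real k / 2^n) \<omega>\<bar> < ((1/2)^n) powr \<beta>"
    using assms(1) meas tail by (rule AE_eventually_dyadic_increments_less)
  with AE_space show ?thesis
  proof eventually_elim
    case (elim \<omega>)
    then obtain n0 where n0: "\<And>n k. n0 \<le> n \<Longrightarrow> k < N * 2^n \<Longrightarrow>
        \<bar>X ((real k + 1) / 2^n) \<omega> - X (real k / 2^n) \<omega>\<bar> < ((1/2)^n) powr \<beta>"
      unfolding eventually_sequentially by blast
    interpret dyadic_increments "\<lambda>t. X t \<omega>" N \<beta> n0
      using cont[OF \<open>\<omega> \<in> space M\<close>] \<open>0 < \<beta>\<close> n0 by unfold_locales (auto intro: less_imp_le)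
    show ?case by (rule holder_on_Icc)
  qed
qed

section \<open>Hoelder paths of fractional Brownian motion\<close>

lemma continuous_fbm_prob_space: "continuous_fbm M H Z \<Longrightarrow> prob_space M"
  unfolding continuous_fbm_def centered_gaussian_process_def by blast

lemma continuous_fbm_measurable: "continuous_fbm M H Z \<Longrightarrow> 0 \<le> t \<Longrightarrow> Z t \<in> borel_measurable M"
  unfolding continuous_fbm_def centered_gaussian_process_def by simp

lemma centered_gaussian_process_combination:
  fixes n :: nat and ts :: "nat \<Rightarrow> real" and c :: "nat \<Rightarrow> real"
  assumes "centered_gaussian_process M T K X" "\<forall>i<n. ts i \<in> T"
  defines "v \<equiv> \<Sum>i<n. \<Sum>j<n. c i * c j * K (ts i) (ts j)"
  shows "0 < v \<Longrightarrow> distributed M lborel (\<lambda>\<omega>. \<Sum>i<n. c i * X (ts i) \<omega>) (normal_density 0 (sqrt v))"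
    and "\<not> 0 < v \<Longrightarrow> AE \<omega> in M. (\<Sum>i<n. c i * X (ts i) \<omega>) = 0"
proof -
  have "\<forall>(n::nat) (ts::nat \<Rightarrow> real) (c::nat \<Rightarrow> real). (\<forall>i<n. ts i \<in> T) \<longrightarrow>
        (let v = (\<Sum>i<n. \<Sum>j<n. c i * c j * K (ts i) (ts j)) in
          (if v > 0
           then distributed M lborel (\<lambda>\<omega>. \<Sum>i<n. c i * X (ts i) \<omega>) (normal_density 0 (sqrt v))
           else (AE \<omega> in M. (\<Sum>i<n. c i * X (ts i) \<omega>) = 0)))"
    using assms(1) unfolding centered_gaussian_process_def by (elim conjE)
  then have "if 0 < v then distributed M lborel (\<lambda>\<omega>. \<Sum>i<n. c i * X (ts i) \<omega>) (normal_density 0 (sqrt v))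
      else AE \<omega> in M. (\<Sum>i<n. c i * X (ts i) \<omega>) = 0"
    using assms(2) unfolding v_def Let_def by blast
  then show "0 < v \<Longrightarrow> distributed M lborel (\<lambda>\<omega>. \<Sum>i<n. c i * X (ts i) \<omega>) (normal_density 0 (sqrt v))"
    and "\<not> 0 < v \<Longrightarrow> AE \<omega> in M. (\<Sum>i<n. c i * X (ts i) \<omega>) = 0"
    by simp_all
qed

lemma continuous_fbm_AE_zero:
  assumes Z: "continuous_fbm M H Z" and "0 < H"
  shows "AE \<omega> in M. Z 0 \<omega> = 0"
proof -
  have G: "centered_gaussian_process M {0..} (fbm_cov H) Z" using Z by (simp add: continuous_fbm_def)
  show ?thesis
    using centered_gaussian_process_combination(2)[OF G, of 1 "\<lambda>_. 0" "\<lambda>_. 1"] \<open>0 < H\<close>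
    by (simp add: fbm_cov_def)
qed

lemma continuous_fbm_increment_distributed:
  assumes Z: "continuous_fbm M H Z" and "0 \<le> s" "0 \<le> t" "s \<noteq> t"
  shows "distributed M lborel (\<lambda>\<omega>. Z t \<omega> - Z s \<omega>) (normal_density 0 (\<bar>t - s\<bar> powr H))"
proof -
  have G: "centered_gaussian_process M {0..} (fbm_cov H) Z" using Z by (simp add: continuous_fbm_def)
  define ts where "ts i = (if i = 0 then t else s)" for i :: nat
  define c where "c i = (if i = 0 then 1 else -1 :: real)" for i :: nat
  have "\<forall>i<2. ts i \<in> {0..}" using assms by (auto simp: ts_def)
  note combination = centered_gaussian_process_combination(1)[OF G this, of c]
  have "(\<Sum>i<2. \<Sum>j<2. c i * c j * fbm_cov H (ts i) (ts j)) = \<bar>t - s\<bar> powr (2 * H)"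
    by (simp add: numeral_2_eq_2 ts_def c_def fbm_cov_def abs_minus_commute field_simps)
  moreover have "(\<lambda>\<omega>. \<Sum>i<2. c i * Z (ts i) \<omega>) = (\<lambda>\<omega>. Z t \<omega> - Z s \<omega>)"
    by (simp add: numeral_2_eq_2 ts_def c_def)
  moreover have "sqrt (\<bar>t - s\<bar> powr (2 * H)) = \<bar>t - s\<bar> powr H"
    by (simp add: powr_half_sqrt[symmetric] powr_powr)
  ultimately show ?thesis using combination \<open>s \<noteq> t\<close> by simp
qed

lemma normal_tail_le_even_moment:
  fixes X :: "'a \<Rightarrow> real"
  assumes "prob_space M" and X: "distributed M lborel X (normal_density 0 \<sigma>)" and "0 < \<sigma>" "0 < \<epsilon>"
  shows "measure M {\<omega>\<in>space M. \<epsilon> \<le> \<bar>X \<omega>\<bar>} \<le> fact (2 * p) / (2^p * fact p) * \<sigma>^(2 * p) / \<epsilon>^(2 * p)"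
proof -
  interpret prob_space M by fact
  have [measurable]: "X \<in> borel_measurable M" using distributed_measurable[OF X] by simp
  have moment: "has_bochner_integral lborel (\<lambda>x. normal_density 0 \<sigma> x * x ^ (2 * p))
      (fact (2 * p) / (2^p * fact p) * \<sigma>^(2 * p))"
  proof -
    have "(2 / \<sigma>\<^sup>2)^p = 2^p / \<sigma>^(2 * p)" by (simp add: power_divide power_mult)
    then have eq: "fact (2 * p) / ((2 / \<sigma>\<^sup>2)^p * fact p) = fact (2 * p) / (2^p * fact p) * \<sigma>^(2 * p)"
      using \<open>0 < \<sigma>\<close> by simp
    have "has_bochner_integral lborel (\<lambda>x. normal_density 0 \<sigma> x * x ^ (2 * p))
        (fact (2 * p) / ((2 / \<sigma>\<^sup>2)^p * fact p))"
      using normal_moment_even[OF \<open>0 < \<sigma>\<close>, of 0 p] by simp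
    then show ?thesis unfolding eq .
  qed
  have density_nonneg: "\<And>x. 0 \<le> normal_density 0 \<sigma> x" by (simp add: normal_density_nonneg)
  have int: "integrable M (\<lambda>\<omega>. X \<omega> ^ (2 * p))"
    using distributed_integrable[OF X, of "\<lambda>x. x ^ (2 * p)"] moment density_nonneg
    by (simp add: has_bochner_integral_iff)
  have sub: "{\<omega>\<in>space M. \<epsilon> \<le> \<bar>X \<omega>\<bar>} \<subseteq> {\<omega>\<in>space M. \<epsilon>^(2 * p) \<le> X \<omega> ^ (2 * p)}"
  proof safe
    fix \<omega> assume "\<epsilon> \<le> \<bar>X \<omega>\<bar>"
    then have "\<epsilon>^(2 * p) \<le> \<bar>X \<omega>\<bar>^(2 * p)" using \<open>0 < \<epsilon>\<close> by (intro power_mono) auto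
    then show "\<epsilon>^(2 * p) \<le> X \<omega> ^ (2 * p)" by (simp add: power_even_abs)
  qed
  have "measure M {\<omega>\<in>space M. \<epsilon> \<le> \<bar>X \<omega>\<bar>} \<le> measure M {\<omega>\<in>space M. \<epsilon>^(2 * p) \<le> X \<omega> ^ (2 * p)}"
    using sub by (intro finite_measure_mono) measurable
  also have "\<dots> \<le> (\<integral>\<omega>. X \<omega> ^ (2 * p) \<partial>M) / \<epsilon>^(2 * p)"
    by (rule integral_Markov_inequality_measure[OF int, of "space M"])
      (use \<open>0 < \<epsilon>\<close> in \<open>auto simp: zero_le_even_power\<close>)
  also have "(\<integral>\<omega>. X \<omega> ^ (2 * p) \<partial>M) = fact (2 * p) / (2^p * fact p) * \<sigma>^(2 * p)"
    using distributed_integral[OF X, of "\<lambda>x. x ^ (2 * p)"] moment density_nonneg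
    by (auto dest: has_bochner_integral_integral_eq)
  finally show ?thesis .
qed

lemma continuous_fbm_increment_tail:
  assumes Z: "continuous_fbm M H Z" and "0 \<le> s" "0 \<le> t" "0 < \<epsilon>"
  shows "measure M {\<omega>\<in>space M. \<epsilon> \<le> \<bar>Z t \<omega> - Z s \<omega>\<bar>}
           \<le> fact (2 * p) / (2^p * fact p) * \<bar>t - s\<bar> powr (2 * H * p) / \<epsilon>^(2 * p)"
proof (cases "s = t")
  case True
  then show ?thesis using \<open>0 < \<epsilon>\<close> by simp
next
  case False
  have "measure M {\<omega>\<in>space M. \<epsilon> \<le> \<bar>Z t \<omega> - Z s \<omega>\<bar>}
      \<le> fact (2 * p) / (2^p * fact p) * (\<bar>t - s\<bar> powr H)^(2 * p) / \<epsilon>^(2 * p)"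
    using False \<open>0 < \<epsilon>\<close>
    by (intro normal_tail_le_even_moment continuous_fbm_prob_space[OF Z]
        continuous_fbm_increment_distributed[OF Z \<open>0 \<le> s\<close> \<open>0 \<le> t\<close>]) auto
  also have "(\<bar>t - s\<bar> powr H)^(2 * p) = \<bar>t - s\<bar> powr (2 * H * p)"
    using False by (simp add: powr_power mult_ac)
  finally show ?thesis .
qed

lemma continuous_fbm_dyadic_tail:
  assumes Z: "continuous_fbm M H Z" and "0 < \<beta>" "\<beta> < H"
  obtains K where "\<And>n k. measure M {\<omega>\<in>space M.
      ((1/2)^n) powr \<beta> \<le> \<bar>Z ((real k + 1) / 2^n) \<omega> - Z (real k / 2^n) \<omega>\<bar>} \<le> K * (1/4)^n"
proof -
  \<comment> \<open>The 2p-th moment bounds a dyadic tail of level n by (2^-n)^(2p(H - \<beta>)); this choice of p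
    makes the exponent at least 2, so summing over the 2^n intervals of level n stays summable.\<close>
  define p where "p = nat \<lceil>1 / (H - \<beta>)\<rceil>"
  have "1 / (H - \<beta>) \<le> real p" unfolding p_def by linarith
  then have p: "2 \<le> 2 * real p * (H - \<beta>)" using assms(3) by (simp add: field_simps)
  define K :: real where "K = fact (2 * p) / (2^p * fact p)"
  have "0 \<le> K" unfolding K_def by simp
  show ?thesis
  proof (rule that[of K])
    fix n k :: nat
    define \<delta> :: real where "\<delta> = (1/2)^n"
    have "0 < \<delta>" "\<delta> \<le> 1" unfolding \<delta>_def by (auto simp: power_le_one)
    have "\<bar>(real k + 1) / 2^n - real k / 2^n\<bar> = \<delta>"
      unfolding \<delta>_def by (simp add: diff_divide_distrib[symmetric] power_one_over)
    then have "measure M {\<omega>\<in>space M. \<delta> powr \<beta> \<le> \<bar>Z ((real k + 1) / 2^n) \<omega> - Z (real k / 2^n) \<omega>\<bar>}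
        \<le> K * \<delta> powr (2 * H * p) / (\<delta> powr \<beta>)^(2 * p)"
      unfolding K_def using continuous_fbm_increment_tail[OF Z, of "real k / 2^n" "(real k + 1) / 2^n" "\<delta> powr \<beta>" p]
        \<open>0 < \<delta>\<close> by simp
    also have "\<dots> = K * \<delta> powr (2 * real p * (H - \<beta>))"
      using \<open>0 < \<delta>\<close> by (simp add: powr_power powr_powr powr_diff right_diff_distrib mult_ac)
    also have "\<dots> \<le> K * \<delta> powr 2"
      using \<open>0 < \<delta>\<close> \<open>\<delta> \<le> 1\<close> p \<open>0 \<le> K\<close> by (intro mult_left_mono powr_mono') auto
    also have "\<delta> powr 2 = (1/4)^n"
      using \<open>0 < \<delta>\<close> unfolding \<delta>_def by (simp add: power2_eq_square power_mult_distrib[symmetric])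
    finally show "measure M {\<omega>\<in>space M.
        ((1/2)^n) powr \<beta> \<le> \<bar>Z ((real k + 1) / 2^n) \<omega> - Z (real k / 2^n) \<omega>\<bar>} \<le> K * (1/4)^n"
      unfolding \<delta>_def .
  qed
qed

lemma AE_continuous_fbm_holder_on_Icc:
  assumes Z: "continuous_fbm M H Z" and "0 < \<beta>" "\<beta> < H"
  shows "AE \<omega> in M. holder_on {0..real N} \<beta> (\<lambda>t. Z t \<omega>)"
proof -
  obtain K where "\<And>n k. measure M {\<omega>\<in>space M.
      ((1/2)^n) powr \<beta> \<le> \<bar>Z ((real k + 1) / 2^n) \<omega> - Z (real k / 2^n) \<omega>\<bar>} \<le> K * (1/4)^n"
    using continuous_fbm_dyadic_tail[OF assms] by blast
  moreover have "continuous_on {0..real N} (\<lambda>t. Z t \<omega>)" if "\<omega> \<in> space M" for \<omega>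
    using Z that unfolding continuous_fbm_def by (auto intro: continuous_on_subset)
  ultimately show ?thesis
    using continuous_fbm_prob_space[OF Z] continuous_fbm_measurable[OF Z] \<open>0 < \<beta>\<close>
    by (intro AE_holder_on_Icc_if_dyadic_tails) auto
qed

definition holder_path_below :: "real \<Rightarrow> (real \<Rightarrow> real) \<Rightarrow> bool" where
  "holder_path_below H z \<longleftrightarrow> z 0 = 0 \<and> (\<forall>\<beta> b. 0 < \<beta> \<and> \<beta> < H \<longrightarrow> holder_on {0..b} \<beta> z)"

lemma AE_continuous_fbm_holder_path_below:
  assumes Z: "continuous_fbm M H Z" and "0 < H"
  shows "AE \<omega> in M. holder_path_below H (\<lambda>t. Z t \<omega>)"
proof -
  define \<beta> where "\<beta> j = H * (1 - 1 / (real j + 2))" for j :: nat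
  have \<beta>: "0 < \<beta> j" "\<beta> j < H" for j
  proof -
    have "0 < 1 - 1 / (real j + 2)" "1 - 1 / (real j + 2) < 1" by (auto simp: field_simps)
    then show "0 < \<beta> j" "\<beta> j < H"
      unfolding \<beta>_def using \<open>0 < H\<close> mult_strict_left_mono[of _ 1 H] by auto
  qed
  have "AE \<omega> in M. \<forall>j (N::nat). holder_on {0..real N} (\<beta> j) (\<lambda>t. Z t \<omega>)"
    using AE_continuous_fbm_holder_on_Icc[OF Z \<beta>] by (simp add: AE_all_countable)
  with continuous_fbm_AE_zero[OF Z \<open>0 < H\<close>] show ?thesis
  proof eventually_elim
    case (elim \<omega>)
    have "holder_on {0..b} \<beta>' (\<lambda>t. Z t \<omega>)" if \<beta>': "0 < \<beta>'" "\<beta>' < H" for \<beta>' b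
    proof -
      obtain j :: nat where "0 < j" "inverse (real j) < (H - \<beta>') / H"
        using ex_inverse_of_nat_less[of "(H - \<beta>') / H"] \<beta>' \<open>0 < H\<close> by auto
      moreover have "1 / (real j + 2) \<le> inverse (real j)" using \<open>0 < j\<close> by (simp add: field_simps)
      ultimately have "1 / (real j + 2) \<le> (H - \<beta>') / H" by linarith
      then have "\<beta>' \<le> \<beta> j" unfolding \<beta>_def using \<open>0 < H\<close> by (simp add: field_simps)
      then have "holder_on {0..real (nat \<lceil>b\<rceil>)} \<beta>' (\<lambda>t. Z t \<omega>)"
        using holder_on_Icc_mono_exponent[of 0 "real (nat \<lceil>b\<rceil>)" "\<beta> j" "\<lambda>t. Z t \<omega>" \<beta>'] elim \<beta>'
        by simp
      then show ?thesis by (rule holder_on_subset) (auto intro: order_trans[OF _ real_nat_ceiling_ge])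
    qed
    with elim show ?case unfolding holder_path_below_def by blast
  qed
qed

section \<open>Integrals over a half-line\<close>

lemma convergent_at_bot_if_increment_bound:
  fixes \<Phi> \<epsilon> :: "real \<Rightarrow> real"
  assumes bound: "\<And>T1 T2. T1 \<le> T2 \<Longrightarrow> T2 \<le> R \<Longrightarrow> \<bar>\<Phi> T1 - \<Phi> T2\<bar> \<le> \<epsilon> T2"
    and \<epsilon>: "(\<epsilon> \<longlongrightarrow> 0) at_bot"
  shows "\<exists>L. (\<Phi> \<longlongrightarrow> L) at_bot"
proof -
  have "filterlim (\<lambda>n::nat. R - real n) at_bot sequentially"
    unfolding filterlim_at_bot eventually_sequentially
  proof
    fix Z :: real show "\<exists>N. \<forall>n\<ge>N. R - real n \<le> Z" by (intro exI[of _ "nat \<lceil>R - Z\<rceil>"]) linarith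
  qed
  then have \<epsilon>_seq: "(\<lambda>n. \<epsilon> (R - real n)) \<longlonglongrightarrow> 0" by (rule filterlim_compose[OF \<epsilon>])
  have "Cauchy (\<lambda>n. \<Phi> (R - real n))"
  proof (rule metric_CauchyI)
    fix e :: real assume "0 < e"
    have "\<forall>\<^sub>F n in sequentially. \<epsilon> (R - real n) < e" using \<epsilon>_seq \<open>0 < e\<close> by (rule order_tendstoD(2))
    then obtain M where M: "\<And>n. M \<le> n \<Longrightarrow> \<epsilon> (R - real n) < e"
      unfolding eventually_sequentially by blast
    have close: "dist (\<Phi> (R - real m)) (\<Phi> (R - real n)) < e" if "M \<le> m" "m \<le> n" for m n
      using bound[of "R - real n" "R - real m"] M[of m] that by (simp add: dist_real_def abs_minus_commute)
    have "dist (\<Phi> (R - real m)) (\<Phi> (R - real n)) < e" if "M \<le> m" "M \<le> n" for m n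
      using close[of m n] close[of n m] that by (cases "m \<le> n") (auto simp: dist_commute)
    then show "\<exists>M. \<forall>m\<ge>M. \<forall>n\<ge>M. dist (\<Phi> (R - real m)) (\<Phi> (R - real n)) < e"
      by blast
  qed
  then obtain L where L: "(\<lambda>n. \<Phi> (R - real n)) \<longlonglongrightarrow> L"
    using Cauchy_convergent_iff convergent_def by blast
  have "\<bar>\<Phi> T - L\<bar> \<le> \<epsilon> T" if "T \<le> R" for T
  proof -
    have "(\<lambda>n. \<bar>\<Phi> T - \<Phi> (R - real n)\<bar>) \<longlonglongrightarrow> \<bar>\<Phi> T - L\<bar>" by (intro tendsto_intros L)
    then show ?thesis
    proof (rule LIMSEQ_le_const2, intro exI[of _ "nat \<lceil>R - T\<rceil>"] allI impI)
      fix n assume "nat \<lceil>R - T\<rceil> \<le> n"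
      then show "\<bar>\<Phi> T - \<Phi> (R - real n)\<bar> \<le> \<epsilon> T"
        using bound[of "R - real n" T] \<open>T \<le> R\<close> by (simp add: abs_minus_commute)
    qed
  qed
  then have "((\<lambda>T. \<Phi> T - L) \<longlongrightarrow> 0) at_bot"
    by (intro Lim_null_comparison[OF _ \<epsilon>]) (auto simp: eventually_at_bot_linorder)
  then show ?thesis by (auto simp: LIM_zero_iff)
qed

lemma has_real_derivative_exp_scaled: "((\<lambda>s. exp (c * s)) has_real_derivative c * exp (c * s)) (at s)"
  by (auto intro!: derivative_eq_intros)

lemma abs_integral_le_exp_bound:
  fixes h :: "real \<Rightarrow> real"
  assumes "continuous_on {a..b} h" "a \<le> b" "0 < \<kappa>"
    and bound: "\<And>u. u \<in> {a..b} \<Longrightarrow> \<bar>h u\<bar> \<le> K * exp (\<kappa> * u)"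
  shows "\<bar>integral {a..b} h\<bar> \<le> K / \<kappa> * exp (\<kappa> * b)"
proof -
  have "0 \<le> K * exp (\<kappa> * a)" using bound[of a] \<open>a \<le> b\<close> by (auto intro: order_trans[OF abs_ge_zero])
  then have "0 \<le> K" by (simp add: zero_le_mult_iff)
  have "((\<lambda>u. K / \<kappa> * exp (\<kappa> * u)) has_real_derivative K * exp (\<kappa> * u)) (at u within {a..b})" for u
    using \<open>0 < \<kappa>\<close> by (auto intro!: derivative_eq_intros)
  then have antiderivative:
    "((\<lambda>u. K * exp (\<kappa> * u)) has_integral K / \<kappa> * exp (\<kappa> * b) - K / \<kappa> * exp (\<kappa> * a)) {a..b}"
    using \<open>a \<le> b\<close> by (intro fundamental_theorem_of_calculus)
      (auto simp: has_real_derivative_iff_has_vector_derivative[symmetric])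
  have "norm (integral {a..b} h) \<le> integral {a..b} (\<lambda>u. K * exp (\<kappa> * u))"
    using bound antiderivative
    by (intro integral_norm_bound_integral integrable_continuous_interval \<open>continuous_on {a..b} h\<close>)
      (auto intro!: continuous_intros)
  also have "\<dots> \<le> K / \<kappa> * exp (\<kappa> * b)"
    using integral_unique[OF antiderivative] \<open>0 \<le> K\<close> \<open>0 < \<kappa>\<close> by simp
  finally show ?thesis by simp
qed

lemma abs_RS_integral_exp_le:
  fixes g :: "real \<Rightarrow> real"
  assumes g: "continuous_on {T1..T2} g"
    and bound: "\<And>s. s \<le> 0 \<Longrightarrow> \<bar>g s\<bar> \<le> D * exp (\<kappa> * s)" and "0 < c + \<kappa>"
    and T: "T1 \<le> T2" "T2 \<le> 0"
  shows "\<bar>RS_integral (\<lambda>s. exp (c * s)) g T1 T2\<bar> \<le> D * (2 + \<bar>c\<bar> / (c + \<kappa>)) * exp ((c + \<kappa>) * T2)"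
proof -
  define \<kappa>' where "\<kappa>' = c + \<kappa>"
  have "0 \<le> D" using bound[of 0] by (simp add: order_trans[OF abs_ge_zero])
  have decay: "\<bar>exp (c * s) * g s\<bar> \<le> D * exp (\<kappa>' * s)" if "s \<le> 0" for s
  proof -
    have "\<bar>exp (c * s) * g s\<bar> \<le> exp (c * s) * (D * exp (\<kappa> * s))"
      using bound[OF that] by (simp add: abs_mult)
    also have "\<dots> = D * exp (\<kappa>' * s)" by (simp add: \<kappa>'_def algebra_simps flip: exp_add)
    finally show ?thesis .
  qed
  have "\<bar>integral {T1..T2} (\<lambda>u. g u * (c * exp (c * u)))\<bar> \<le> D * \<bar>c\<bar> / \<kappa>' * exp (\<kappa>' * T2)"
  proof (rule abs_integral_le_exp_bound)
    show "continuous_on {T1..T2} (\<lambda>u. g u * (c * exp (c * u)))" by (intro continuous_intros g)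
    fix u assume "u \<in> {T1..T2}"
    then have "\<bar>exp (c * u) * g u\<bar> \<le> D * exp (\<kappa>' * u)" using T by (intro decay) auto
    then have "\<bar>c\<bar> * \<bar>exp (c * u) * g u\<bar> \<le> \<bar>c\<bar> * (D * exp (\<kappa>' * u))"
      by (rule mult_left_mono) simp
    then show "\<bar>g u * (c * exp (c * u))\<bar> \<le> D * \<bar>c\<bar> * exp (\<kappa>' * u)"
      by (simp add: abs_mult mult_ac)
  qed (use T \<open>0 < c + \<kappa>\<close> in \<open>simp_all add: \<kappa>'_def\<close>)
  moreover have "D * exp (\<kappa>' * T1) \<le> D * exp (\<kappa>' * T2)"
    using T \<open>0 < c + \<kappa>\<close> \<open>0 \<le> D\<close> by (simp add: \<kappa>'_def mult_left_mono)
  moreover have "RS_integral (\<lambda>s. exp (c * s)) g T1 T2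
      = exp (c * T2) * g T2 - exp (c * T1) * g T1 - integral {T1..T2} (\<lambda>u. g u * (c * exp (c * u)))"
    by (rule RS_integral_by_parts[where f'="\<lambda>s. c * exp (c * s)", OF T(1) g has_real_derivative_exp_scaled])
      (intro continuous_intros)
  moreover have "\<bar>x - y - z\<bar> \<le> \<bar>x\<bar> + \<bar>y\<bar> + \<bar>z\<bar>" for x y z :: real by arith
  ultimately have "\<bar>RS_integral (\<lambda>s. exp (c * s)) g T1 T2\<bar>
      \<le> D * exp (\<kappa>' * T2) + D * exp (\<kappa>' * T2) + D * \<bar>c\<bar> / \<kappa>' * exp (\<kappa>' * T2)"
    using decay[of T1] decay[of T2] T by fastforce
  then show ?thesis by (simp add: \<kappa>'_def algebra_simps)
qed

lemma RS_integral_exp_tendsto_at_bot: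
  fixes g :: "real \<Rightarrow> real"
  assumes g: "\<And>a b. continuous_on {a..b} g"
    and bound: "\<And>s. s \<le> 0 \<Longrightarrow> \<bar>g s\<bar> \<le> D * exp (\<kappa> * s)" and "0 < c + \<kappa>"
  shows "\<exists>L. ((\<lambda>T. RS_integral (\<lambda>s. exp (c * s)) g T t) \<longlongrightarrow> L) at_bot"
proof (rule convergent_at_bot_if_increment_bound)
  fix T1 T2 assume "T1 \<le> T2" "T2 \<le> min t 0"
  then have "RS_integral (\<lambda>s. exp (c * s)) g T1 t
      = RS_integral (\<lambda>s. exp (c * s)) g T1 T2 + RS_integral (\<lambda>s. exp (c * s)) g T2 t"
    by (intro RS_integral_combine[where f'="\<lambda>s. c * exp (c * s)", OF _ _ g has_real_derivative_exp_scaled]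
        continuous_intros) auto
  then show "\<bar>RS_integral (\<lambda>s. exp (c * s)) g T1 t - RS_integral (\<lambda>s. exp (c * s)) g T2 t\<bar>
      \<le> D * (2 + \<bar>c\<bar> / (c + \<kappa>)) * exp ((c + \<kappa>) * T2)"
    using abs_RS_integral_exp_le[OF g bound \<open>0 < c + \<kappa>\<close> \<open>T1 \<le> T2\<close>] \<open>T2 \<le> min t 0\<close> by simp
next
  show "((\<lambda>T. D * (2 + \<bar>c\<bar> / (c + \<kappa>)) * exp ((c + \<kappa>) * T)) \<longlongrightarrow> 0) at_bot"
    using \<open>0 < c + \<kappa>\<close>
    by (intro tendsto_mult_right_zero filterlim_compose[OF exp_at_bot]
        filterlim_tendsto_pos_mult_at_bot[OF tendsto_const _ filterlim_ident])
qed

section \<open>The processes Y and U\<close>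

lemma time_change_has_real_derivative:
  assumes "0 < H" "0 < \<alpha>"
  shows "((\<lambda>s. time_change H s \<alpha>) has_real_derivative exp (\<alpha> * s / H)) (at s within S)"
  unfolding time_change_def using assms by (auto intro!: derivative_eq_intros simp: field_simps)

lemma time_change_mono:
  assumes "0 < H" "0 < \<alpha>" "s \<le> t"
  shows "time_change H s \<alpha> \<le> time_change H t \<alpha>"
  unfolding time_change_def using assms by (simp add: divide_right_mono mult_left_mono)

lemma holder_on_time_change:
  assumes z: "holder_path_below H z" and "0 < H" "0 < \<alpha>" "0 < \<beta>" "\<beta> < H"
  shows "holder_on {A..B} \<beta> (\<lambda>s. z (time_change H s \<alpha>))"
proof -
  have z_holder: "holder_on {0..time_change H B \<alpha>} \<beta> z"
    using z \<open>0 < \<beta>\<close> \<open>\<beta> < H\<close> unfolding holder_path_below_def by blast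
  have maps: "(\<lambda>s. time_change H s \<alpha>) ` {A..B} \<subseteq> {0..time_change H B \<alpha>}"
  proof safe
    fix s assume "s \<in> {A..B}"
    then show "time_change H s \<alpha> \<in> {0..time_change H B \<alpha>}"
      using time_change_mono[OF \<open>0 < H\<close> \<open>0 < \<alpha>\<close>, of s B] \<open>0 < H\<close> \<open>0 < \<alpha>\<close>
      by (simp add: time_change_def[of H s])
  qed
  obtain L where L: "L-lipschitz_on {A..B} (\<lambda>s. time_change H s \<alpha>)"
    using time_change_has_real_derivative[OF \<open>0 < H\<close> \<open>0 < \<alpha>\<close>]
    by (rule lipschitz_on_Icc_if_continuous_deriv) (intro continuous_intros, use \<open>0 < H\<close> in auto)
  show ?thesis using holder_on_compose_lipschitz[OF z_holder _ maps L] \<open>0 < \<beta>\<close> by simp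
qed

lemma continuous_on_time_change:
  assumes "holder_path_below H z" "0 < H" "0 < \<alpha>"
  shows "continuous_on {A..B} (\<lambda>s. z (time_change H s \<alpha>))"
proof (rule holder_on_imp_continuous_on)
  show "holder_on {A..B} (H / 2) (\<lambda>s. z (time_change H s \<alpha>))"
    by (rule holder_on_time_change[OF assms]) (use assms(2) in auto)
qed (use assms(2) in simp)

lemma holder_on_RS_integral_exp_time_change:
  assumes "holder_path_below H z" "0 < H" "0 < \<alpha>" "0 < \<beta>" "\<beta> < H" "\<beta> \<le> 1"
  shows "holder_on {A..B} \<beta> (\<lambda>t. RS_integral (\<lambda>s. exp (c * s)) (\<lambda>s. z (time_change H s \<alpha>)) A t)"
proof (rule holder_on_RS_integral[where f'="\<lambda>s. c * exp (c * s)"])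
  show "holder_on {A..B} \<beta> (\<lambda>s. z (time_change H s \<alpha>))"
    using assms(1-5) by (rule holder_on_time_change)
  show "((\<lambda>s. exp (c * s)) has_real_derivative c * exp (c * u)) (at u)" for u
    by (rule has_real_derivative_exp_scaled)
  show "continuous_on {A..B} (\<lambda>s. c * exp (c * s))" by (intro continuous_intros)
qed (use assms(4,6) in auto)

lemma Y_proc_locally_holder:
  assumes "holder_path_below H (\<lambda>t. Z t \<omega>)" "0 < H" "0 < \<alpha>" "0 < \<beta>" "\<beta> < H" "\<beta> \<le> 1"
  shows "locally_holder_on {0..} \<beta> (\<lambda>t. Y_proc H Z \<alpha> t \<omega>)"
  unfolding Y_proc_def
  by (intro locally_holder_on_atLeast holder_on_RS_integral_exp_time_change[OF assms])

lemma time_changed_path_decay: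
  assumes z: "holder_path_below H z" and "0 < H" "0 < \<beta>" "\<beta> < H"
  obtains D where "\<And>s. s \<le> 0 \<Longrightarrow> \<bar>z (time_change H s 1)\<bar> \<le> D * exp (\<beta> / H * s)"
proof -
  have "holder_on {0..H} \<beta> z" using z assms(3,4) unfolding holder_path_below_def by blast
  then obtain C where C: "\<And>u v. u \<in> {0..H} \<Longrightarrow> v \<in> {0..H} \<Longrightarrow> \<bar>z u - z v\<bar> \<le> C * \<bar>u - v\<bar> powr \<beta>"
    unfolding holder_on_def by blast
  show ?thesis
  proof (rule that[of "C * H powr \<beta>"])
    fix s :: real assume "s \<le> 0"
    then have "time_change H s 1 \<in> {0..H}" using \<open>0 < H\<close> by (simp add: time_change_def divide_nonpos_pos)
    moreover have "z 0 = 0" using z unfolding holder_path_below_def by blast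
    ultimately have "\<bar>z (time_change H s 1)\<bar> \<le> C * \<bar>time_change H s 1 - 0\<bar> powr \<beta>"
      using C[of "time_change H s 1" 0] \<open>0 < H\<close> by simp
    also have "\<bar>time_change H s 1 - 0\<bar> powr \<beta> = H powr \<beta> * exp (\<beta> / H * s)"
      using \<open>0 < H\<close> by (simp add: time_change_def powr_mult) (simp add: powr_def)
    finally show "\<bar>z (time_change H s 1)\<bar> \<le> C * H powr \<beta> * exp (\<beta> / H * s)"
      by (simp only: mult.assoc)
  qed
qed

lemma U_partial_convergent:
  assumes z: "holder_path_below H (\<lambda>t. Z t \<omega>)" and "0 < H" "0 < \<gamma>"
  shows "\<exists>L. ((\<lambda>T. U_partial H Z \<gamma> T t \<omega>) \<longlongrightarrow> L) at_bot"
proof -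
  define m where "m = min \<gamma> 1"
  have m: "0 < m" "m \<le> 1" "m \<le> \<gamma>" unfolding m_def using \<open>0 < \<gamma>\<close> by auto
  \<comment> \<open>A Hoelder exponent for which the integrand decays at -\<infinity> at the positive rate
    \<gamma> - 1 + \<beta> / H.\<close>
  define \<beta> where "\<beta> = H * (1 - m / 2)"
  have "0 < \<beta>" "\<beta> < H" unfolding \<beta>_def using \<open>0 < H\<close> m by auto
  then obtain D where D: "\<And>s. s \<le> 0 \<Longrightarrow> \<bar>Z (time_change H s 1) \<omega>\<bar> \<le> D * exp (\<beta> / H * s)"
    using time_changed_path_decay[OF z \<open>0 < H\<close>] by blast
  have "\<beta> / H = 1 - m / 2" unfolding \<beta>_def using \<open>0 < H\<close> by simp
  then have \<kappa>: "0 < \<gamma> - 1 + \<beta> / H" using m by linarith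
  have "\<exists>L. ((\<lambda>T. RS_integral (\<lambda>s. exp ((\<gamma> - 1) * s)) (\<lambda>s. Z (time_change H s 1) \<omega>) T t) \<longlongrightarrow> L) at_bot"
    by (rule RS_integral_exp_tendsto_at_bot[OF _ D \<kappa>])
      (rule continuous_on_time_change[OF z \<open>0 < H\<close> zero_less_one])
  then show ?thesis unfolding U_partial_def .
qed

lemma Lim_U_partial_split:
  assumes z: "holder_path_below H (\<lambda>t. Z t \<omega>)" and "0 < H" "0 < \<gamma>" "a \<le> t"
  shows "Lim at_bot (\<lambda>T. U_partial H Z \<gamma> T t \<omega>) = Lim at_bot (\<lambda>T. U_partial H Z \<gamma> T a \<omega>)
           + RS_integral (\<lambda>s. exp ((\<gamma> - 1) * s)) (\<lambda>s. Z (time_change H s 1) \<omega>) a t"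
    (is "_ = _ + ?I")
proof -
  from U_partial_convergent[where Z=Z and \<omega>=\<omega>, OF z \<open>0 < H\<close> \<open>0 < \<gamma>\<close>]
  obtain L where L: "((\<lambda>T. U_partial H Z \<gamma> T a \<omega>) \<longlongrightarrow> L) at_bot" ..
  have "((\<lambda>T. U_partial H Z \<gamma> T a \<omega> + ?I) \<longlongrightarrow> L + ?I) at_bot"
    by (intro tendsto_add L tendsto_const)
  moreover have "\<forall>\<^sub>F T in at_bot. U_partial H Z \<gamma> T a \<omega> + ?I = U_partial H Z \<gamma> T t \<omega>"
  proof (unfold eventually_at_bot_linorder, intro exI[of _ a] allI impI)
    fix T assume "T \<le> a"
    then show "U_partial H Z \<gamma> T a \<omega> + ?I = U_partial H Z \<gamma> T t \<omega>"
      unfolding U_partial_def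
      by (intro RS_integral_combine[where f'="\<lambda>s. (\<gamma> - 1) * exp ((\<gamma> - 1) * s)", symmetric,
            OF _ \<open>a \<le> t\<close> continuous_on_time_change[OF z \<open>0 < H\<close> zero_less_one] has_real_derivative_exp_scaled]
          continuous_intros)
  qed
  ultimately have "((\<lambda>T. U_partial H Z \<gamma> T t \<omega>) \<longlongrightarrow> L + ?I) at_bot"
    by (rule Lim_transform_eventually)
  then show ?thesis
    using L by (simp add: tendsto_Lim[OF trivial_limit_at_bot_linorder])
qed

lemma U_proc_locally_holder:
  assumes z: "holder_path_below H (\<lambda>t. Z t \<omega>)" and "0 < H" "0 < \<gamma>" "0 < \<beta>" "\<beta> < H" "\<beta> \<le> 1"
  shows "locally_holder_on UNIV \<beta> (\<lambda>t. U_proc H Z \<gamma> t \<omega>)"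
proof (rule locally_holder_on_UNIV)
  fix a b :: real
  define L where "L = Lim at_bot (\<lambda>T. U_partial H Z \<gamma> T a \<omega>)"
  have "holder_on {a..b} \<beta> (\<lambda>t. exp (- \<gamma> * t)
      * (L + RS_integral (\<lambda>s. exp ((\<gamma> - 1) * s)) (\<lambda>s. Z (time_change H s 1) \<omega>) a t))"
  proof (intro holder_on_mult holder_on_add holder_on_const)
    show "holder_on {a..b} \<beta> (\<lambda>t. exp (- \<gamma> * t))"
      by (rule holder_on_Icc_if_continuous_deriv[where f'="\<lambda>s. - \<gamma> * exp (- \<gamma> * s)",
            OF has_real_derivative_exp_scaled[THEN has_field_derivative_at_within] _ assms(4,6)])
        (intro continuous_intros)
    show "holder_on {a..b} \<beta> (\<lambda>t. RS_integral (\<lambda>s. exp ((\<gamma> - 1) * s)) (\<lambda>s. Z (time_change H s 1) \<omega>) a t)"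
      using z \<open>0 < H\<close> zero_less_one assms(4-6) by (rule holder_on_RS_integral_exp_time_change)
  qed (use assms(4) in simp)
  then show "holder_on {a..b} \<beta> (\<lambda>t. U_proc H Z \<gamma> t \<omega>)"
  proof (rule holder_on_eq)
    fix t assume "t \<in> {a..b}"
    then show "exp (- \<gamma> * t)
        * (L + RS_integral (\<lambda>s. exp ((\<gamma> - 1) * s)) (\<lambda>s. Z (time_change H s 1) \<omega>) a t)
        = U_proc H Z \<gamma> t \<omega>"
      using Lim_U_partial_split[where Z=Z and \<omega>=\<omega>, OF z \<open>0 < H\<close> \<open>0 < \<gamma>\<close>, of a t]
      by (simp add: U_proc_def L_def)
  qed
qed

theorem proposition3p3:
  fixes M :: "'a measure" and H :: real and Z :: "real \<Rightarrow> 'a \<Rightarrow> real"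
  assumes H: "0 < H" "H < 1"
    and Z: "continuous_fbm M H Z"
  shows "(\<forall>\<alpha>>0. AE \<omega> in M. \<forall>\<beta>. 0 < \<beta> \<and> \<beta> < H \<longrightarrow>
            locally_holder_on {0..} \<beta> (\<lambda>t. Y_proc H Z \<alpha> t \<omega>))
       \<and> (\<forall>\<gamma>>0. AE \<omega> in M.
            (\<forall>t. \<exists>L. ((\<lambda>T. U_partial H Z \<gamma> T t \<omega>) \<longlongrightarrow> L) at_bot) \<and>
            (\<forall>\<beta>. 0 < \<beta> \<and> \<beta> < H \<longrightarrow> locally_holder_on UNIV \<beta> (\<lambda>t. U_proc H Z \<gamma> t \<omega>)))"
proof -
  have paths: "AE \<omega> in M. holder_path_below H (\<lambda>t. Z t \<omega>)"
    by (rule AE_continuous_fbm_holder_path_below[OF Z H(1)])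
  show ?thesis
  proof (intro conjI allI impI)
    fix \<alpha> :: real assume "0 < \<alpha>"
    from paths show "AE \<omega> in M. \<forall>\<beta>. 0 < \<beta> \<and> \<beta> < H \<longrightarrow> locally_holder_on {0..} \<beta> (\<lambda>t. Y_proc H Z \<alpha> t \<omega>)"
    proof eventually_elim
      case (elim \<omega>)
      show ?case
        using Y_proc_locally_holder[where Z=Z and \<omega>=\<omega>, OF elim H(1) \<open>0 < \<alpha>\<close>] H(2) by force
    qed
  next
    fix \<gamma> :: real assume "0 < \<gamma>"
    from paths show "AE \<omega> in M. (\<forall>t. \<exists>L. ((\<lambda>T. U_partial H Z \<gamma> T t \<omega>) \<longlongrightarrow> L) at_bot) \<and>
        (\<forall>\<beta>. 0 < \<beta> \<and> \<beta> < H \<longrightarrow> locally_holder_on UNIV \<beta> (\<lambda>t. U_proc H Z \<gamma> t \<omega>))"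
    proof eventually_elim
      case (elim \<omega>)
      show ?case
        using U_partial_convergent[where Z=Z and \<omega>=\<omega>, OF elim H(1) \<open>0 < \<gamma>\<close>]
          U_proc_locally_holder[where Z=Z and \<omega>=\<omega>, OF elim H(1) \<open>0 < \<gamma>\<close>] H(2) by force
    qed
  qed
qed

end
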